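(* Let $\mu,\nu$ be probability measures on $\mathbb{R}^d$ with finite first moments, both equivalent to (i.e. mutually absolutely continuous with) the $d$-dimensional Lebesgue measure $\lambda$. Then \[ \inf_{f\in \mathcal{C}^1(\mathbb{R}^d)}\left(\int f\,d\nu - \int f\,d\mu \right)=\inf_{\rho\in \mathcal{P}^1(\mathbb{R}^d)} \left( C(\nu,\rho)-C(\mu,\rho)\right), \] where $\mathcal{P}^1(\mathbb{R}^d):=\{\rho\in \mathcal{P}(\mathbb{R}^d): \mathrm{supp}(\rho)\subseteq B_1(0)\}$ and $\mathcal{C}^1(\mathbb{R}^d):=\{f:\mathbb{R}^d\to \mathbb{R} \text{ convex}: \|\partial f\|_\infty\le 1\}$.
   Context: $\mathcal{P}(\mathbb{R}^d)$ is the set of Borel probability measures on $\mathbb{R}^d$; $B_1(0)$ is the Euclidean unit ball. For a convex $f$, $\partial f(x):=\{y: f(x')-f(x)\ge\langle y,x'-x\rangle\ \forall x'\}$ is the subdifferential and $\|\partial f\|_\infty:=\sup_{x\in\mathbb{R}^d}\sup_{y\in\partial f(x)}|y|$. For probability measures $\alpha,\rho$, $\Pi(\alpha,\rho)$ is the set of couplings and $C(\alpha,\rho):=\sup_{\pi\in\Pi(\alpha,\rho)}\int\langle x,y\rangle\,\pi(dx,dy)$. *)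

theory Defs
  imports "HOL-Probability.Probability"
begin

definition subdiff :: "('a::real_inner \<Rightarrow> real) \<Rightarrow> 'a \<Rightarrow> 'a set" where
  "subdiff f x = {y. \<forall>x'. f x' - f x \<ge> inner y (x' - x)}"

definition convex_lip1 :: "('a::euclidean_space \<Rightarrow> real) set" where
  "convex_lip1 = {f. convex_on UNIV f \<and> (\<forall>x. \<forall>y\<in>subdiff f x. norm y \<le> 1)}"

definition borel_prob :: "('a::euclidean_space) measure set" where
  "borel_prob = {M. prob_space M \<and> sets M = sets borel}"

definition measure_support :: "('a::metric_space) measure \<Rightarrow> 'a set" where
  "measure_support M = {x. \<forall>e>0. emeasure M (ball x e) > 0}"

definition prob_unit_ball :: "('a::euclidean_space) measure set" where
  "prob_unit_ball = {\<rho>\<in>borel_prob. measure_support \<rho> \<subseteq> cball 0 1}"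

definition couplings :: "'a::euclidean_space measure \<Rightarrow> 'a measure \<Rightarrow> ('a \<times> 'a) measure set" where
  "couplings \<alpha> \<rho> = {\<pi>. prob_space \<pi> \<and> sets \<pi> = sets (borel \<Otimes>\<^sub>M borel)
      \<and> distr \<pi> borel fst = \<alpha> \<and> distr \<pi> borel snd = \<rho>}"

definition corr_cost :: "'a::euclidean_space measure \<Rightarrow> 'a measure \<Rightarrow> real" where
  "corr_cost \<alpha> \<rho> = (SUP \<pi>\<in>couplings \<alpha> \<rho>. integral\<^sup>L \<pi> (\<lambda>(x, y). inner x y))"

end

(*
  Both infima are bounded below by minus the sum of the first moments of mu and nu, so it
  suffices to approximate each side by the other up to any e > 0.

  Given f in C^1, approximate f from below by a maximum F of finitely many affine functions
  <x, y_i> - c_i with |y_i| <= 1. Pushing mu forward along the slope that is active at x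
  gives rho in P^1 whose graph coupling yields C(mu, rho) >= int F dmu + int F* drho, while
  the Fenchel-Young inequality <x, y> <= F(x) + F*(y) yields C(nu, rho) <= int F dnu +
  int F* drho. Hence C(nu, rho) - C(mu, rho) <= int F dnu - int F dmu.

  Given rho in P^1, quantize it by a map T with |T y - y| < delta onto finitely many atoms z
  of masses b_z. Semi-discrete optimal transport (minimizing the dual objective
  v |-> int max_z (<x, z> - v_z) dnu + sum_z b_z v_z) provides a potential v such that the
  Laguerre cells of f = max_z (<x, z> - v_z), which lies in C^1, have nu-masses b_z; this is
  where nu << Lebesgue is needed, as nu must not charge the hyperplanes on which two affine
  pieces tie. The coupling that matches each cell to its atom gives
  C(nu, rho) >= int f dnu + sum_z b_z v_z - delta int |x| dnu, and Fenchel-Young gives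
  C(mu, rho) <= int f dmu + sum_z b_z v_z + delta int |x| dmu.
*)
theory Submission
  imports Defs
begin

section \<open>Convex functions with subgradients in the unit ball\<close>

lemma subdiff_nonempty:
  fixes f :: "'a::euclidean_space \<Rightarrow> real"
  assumes "convex_on UNIV f"
  shows "subdiff f x0 \<noteq> {}"
proof -
  define B where "B = {x0} \<times> {..<f x0}"
  have "convex (epigraph UNIV f)" using assms by (rule convex_epigraphI)
  moreover have "convex B" unfolding B_def by (intro convex_Times convex_singleton convex_real_interval)
  moreover have "epigraph UNIV f \<inter> B = {}" "epigraph UNIV f \<noteq> {}" "B \<noteq> {}"
    by (auto simp: epigraph_def B_def)
  ultimately obtain a c where "a \<noteq> 0" "\<forall>p\<in>epigraph UNIV f. inner a p \<le> c" "\<forall>p\<in>B. c \<le> inner a p"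
    using separating_hyperplane_sets by metis
  moreover obtain a1 a2 where "a = (a1, a2)" by fastforce
  ultimately have "(a1, a2) \<noteq> 0"
    and above: "\<And>x t. f x \<le> t \<Longrightarrow> inner a1 x + a2 * t \<le> c"
    and below: "\<And>t. t < f x0 \<Longrightarrow> c \<le> inner a1 x0 + a2 * t"
    by (auto simp: epigraph_def B_def inner_Pair)
  have "a2 \<le> 0" using above[of x0 "f x0 + 1"] below[of "f x0 - 1"] by (simp add: algebra_simps)
  moreover have "a2 \<noteq> 0"
  proof
    assume "a2 = 0"
    then have "inner a1 (x0 + a1) \<le> inner a1 x0"
      using above[OF order_refl, of "x0 + a1"] below[of "f x0 - 1"] by simp
    then have "inner a1 a1 \<le> 0" by (simp add: inner_add_right)
    then have "a1 = 0" by (metis inner_ge_zero inner_eq_zero_iff order_antisym)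
    with \<open>a2 = 0\<close> \<open>(a1, a2) \<noteq> 0\<close> show False by (simp add: zero_prod_def)
  qed
  ultimately have a2: "a2 < 0" by simp
  have "c \<le> inner a1 x0 + a2 * f x0"
  proof (rule field_le_epsilon)
    fix e :: real assume "0 < e"
    then show "c \<le> inner a1 x0 + a2 * f x0 + e"
      using below[of "f x0 + e / a2"] a2 by (simp add: divide_pos_neg algebra_simps)
  qed
  then have "inner a1 (x - x0) \<le> - a2 * (f x - f x0)" for x
    using above[OF order_refl, of x] by (simp add: inner_diff_right algebra_simps)
  then have "inner (- (a1 /\<^sub>R a2)) (x - x0) \<le> f x - f x0" for x
    using a2 by (simp add: field_simps)
  then show ?thesis unfolding subdiff_def by blast
qed

lemma convex_lip1_lipschitz:
  assumes "f \<in> convex_lip1"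
  shows "1-lipschitz_on UNIV f"
proof (rule lipschitz_onI)
  have le: "f x - f x' \<le> dist x x'" for x x'
  proof -
    obtain y where y: "y \<in> subdiff f x"
      using subdiff_nonempty assms by (fastforce simp: convex_lip1_def)
    then have "inner y (x' - x) \<le> f x' - f x" unfolding subdiff_def by blast
    then have "f x - f x' \<le> inner y (x - x')" by (simp add: inner_diff_right)
    moreover have "\<bar>inner y (x - x')\<bar> \<le> norm (x - x')"
      using Cauchy_Schwarz_ineq2[of y "x - x'"] y assms
      by (auto simp: convex_lip1_def intro: order_trans[OF _ mult_left_le_one_le])
    ultimately show ?thesis
      by (smt (verit) dist_norm)
  qed
  show "dist (f x) (f x') \<le> 1 * dist x x'" for x x'
    using le[of x x'] le[of x' x] by (simp add: dist_real_def dist_commute)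
qed simp

lemma convex_lip1_abs_diff_le:
  assumes "f \<in> convex_lip1"
  shows "\<bar>f x - f x'\<bar> \<le> norm (x - x')"
  using lipschitz_onD[OF convex_lip1_lipschitz[OF assms]] by (simp add: dist_real_def dist_norm)

lemma borel_measurable_convex_lip1:
  assumes "f \<in> convex_lip1"
  shows "f \<in> borel_measurable borel"
  using lipschitz_on_continuous_on[OF convex_lip1_lipschitz[OF assms]]
  by (rule borel_measurable_continuous_onI)

section \<open>Maxima of finitely many affine functions\<close>

definition max_affine :: "'i set \<Rightarrow> ('i \<Rightarrow> 'a::real_inner) \<Rightarrow> ('i \<Rightarrow> real) \<Rightarrow> 'a \<Rightarrow> real" where
  "max_affine I y c x = Max ((\<lambda>i. inner x (y i) - c i) ` I)"

lemma max_affine_ge: "finite I \<Longrightarrow> i \<in> I \<Longrightarrow> inner x (y i) - c i \<le> max_affine I y c x"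
  unfolding max_affine_def by (intro Max_ge) auto

lemma max_affine_attained:
  assumes "finite I" "I \<noteq> {}"
  shows "\<exists>i\<in>I. max_affine I y c x = inner x (y i) - c i"
proof -
  have "max_affine I y c x \<in> (\<lambda>i. inner x (y i) - c i) ` I"
    unfolding max_affine_def using assms by (intro Max_in) auto
  then show ?thesis by auto
qed

lemma max_affine_le_iff:
  "finite I \<Longrightarrow> I \<noteq> {} \<Longrightarrow> max_affine I y c x \<le> t \<longleftrightarrow> (\<forall>i\<in>I. inner x (y i) - c i \<le> t)"
  unfolding max_affine_def by (subst Max_le_iff) auto

lemma borel_measurable_max_affine [measurable]:
  fixes y :: "'i \<Rightarrow> 'a::euclidean_space"
  assumes "finite I"
  shows "max_affine I y c \<in> borel_measurable borel"
  unfolding max_affine_def[abs_def] using assms by measurable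

lemma abs_max_affine_le:
  assumes "finite I" "I \<noteq> {}" "\<And>i. i \<in> I \<Longrightarrow> norm (y i) \<le> r"
  shows "\<bar>max_affine I y c x\<bar> \<le> r * norm x + (\<Sum>i\<in>I. \<bar>c i\<bar>)"
proof -
  obtain i where i: "i \<in> I" "max_affine I y c x = inner x (y i) - c i"
    using max_affine_attained assms by blast
  have "\<bar>inner x (y i)\<bar> \<le> r * norm x"
    using Cauchy_Schwarz_ineq2[of x "y i"] assms(3)[OF i(1)]
    by (metis mult.commute mult_right_mono norm_ge_zero order_trans)
  moreover have "\<bar>c i\<bar> \<le> (\<Sum>i\<in>I. \<bar>c i\<bar>)"
    using i(1) assms(1) by (intro member_le_sum) auto
  ultimately show ?thesis using i(2) by linarith
qed

lemma max_affine_diff_le: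
  assumes "finite I" "I \<noteq> {}"
  shows "max_affine I y c x - max_affine I y d x \<le> (\<Sum>i\<in>I. \<bar>c i - d i\<bar>)"
proof -
  obtain i where i: "i \<in> I" "max_affine I y c x = inner x (y i) - c i"
    using max_affine_attained[OF assms] by blast
  have "inner x (y i) - d i \<le> max_affine I y d x" by (rule max_affine_ge[OF assms(1) i(1)])
  moreover have "\<bar>c i - d i\<bar> \<le> (\<Sum>i\<in>I. \<bar>c i - d i\<bar>)"
    using assms(1) i(1) by (intro member_le_sum) auto
  ultimately show ?thesis using i(2) by linarith
qed

lemma abs_max_affine_diff_le:
  assumes "finite I" "I \<noteq> {}"
  shows "\<bar>max_affine I y c x - max_affine I y d x\<bar> \<le> (\<Sum>i\<in>I. \<bar>c i - d i\<bar>)"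
  using max_affine_diff_le[OF assms, of y c x d] max_affine_diff_le[OF assms, of y d x c]
  by (simp add: abs_minus_commute)

lemma max_affine_add_const:
  assumes "finite I" "I \<noteq> {}"
  shows "max_affine I y (\<lambda>i. c i + t) x = max_affine I y c x - t"
  using Max_add_commute[OF assms, of "\<lambda>i. inner x (y i) - c i" "- t"]
  unfolding max_affine_def by (simp add: algebra_simps)

lemma max_affine_in_convex_lip1:
  fixes y :: "'i \<Rightarrow> 'a::euclidean_space"
  assumes I: "finite I" "I \<noteq> {}" and y: "\<And>i. i \<in> I \<Longrightarrow> norm (y i) \<le> 1"
  shows "max_affine I y c \<in> convex_lip1"
proof -
  let ?f = "max_affine I y c"
  have lip: "?f x - ?f x' \<le> norm (x - x')" for x x'
  proof -
    obtain i where i: "i \<in> I" "?f x = inner x (y i) - c i"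
      using max_affine_attained I by blast
    have "inner (x - x') (y i) \<le> norm (x - x')"
      using Cauchy_Schwarz_ineq2[of "x - x'" "y i"] y[OF i(1)]
      by (smt (verit) mult_left_le norm_ge_zero)
    then show ?thesis
      using max_affine_ge[OF I(1) i(1), of x' y c] i(2) by (simp add: inner_diff_left)
  qed
  have "convex_on UNIV ?f"
  proof (rule convex_onI)
    fix t :: real and x x' :: 'a assume t: "0 < t" "t < 1"
    obtain i where i: "i \<in> I" "?f ((1 - t) *\<^sub>R x + t *\<^sub>R x') = inner ((1 - t) *\<^sub>R x + t *\<^sub>R x') (y i) - c i"
      using max_affine_attained I by blast
    have "inner ((1 - t) *\<^sub>R x + t *\<^sub>R x') (y i) - c i
        = (1 - t) * (inner x (y i) - c i) + t * (inner x' (y i) - c i)"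
      by (simp add: inner_add_left algebra_simps)
    also have "\<dots> \<le> (1 - t) * ?f x + t * ?f x'"
      using t max_affine_ge[OF I(1) i(1)] by (intro add_mono mult_left_mono) auto
    finally show "?f ((1 - t) *\<^sub>R x + t *\<^sub>R x') \<le> (1 - t) * ?f x + t * ?f x'"
      using i(2) by simp
  qed simp
  moreover have "norm z \<le> 1" if "z \<in> subdiff ?f x" for x z
  proof -
    have "inner z ((x + z) - x) \<le> ?f (x + z) - ?f x" using that unfolding subdiff_def by blast
    then have "norm z ^ 2 \<le> norm z" using lip[of "x + z" x] by (simp add: power2_norm_eq_inner)
    then show ?thesis by (cases "norm z = 0") (auto simp: power2_eq_square)
  qed
  ultimately show ?thesis unfolding convex_lip1_def by blast
qed

lemma max_affine_argmax_selector:
  fixes y :: "'i \<Rightarrow> 'a::euclidean_space"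
  assumes "finite I" "I \<noteq> {}"
  obtains \<kappa> where "\<And>x. \<kappa> x \<in> I" "\<And>x. inner x (y (\<kappa> x)) - c (\<kappa> x) = max_affine I y c x"
    "(\<lambda>x. y (\<kappa> x)) \<in> borel_measurable borel"
proof -
  obtain ids where "set ids = I" using finite_list assms(1) by blast
  define active where
    "active j x \<longleftrightarrow> j < length ids \<and> inner x (y (ids ! j)) - c (ids ! j) = max_affine I y c x" for j x
  define \<kappa> where "\<kappa> x = ids ! (LEAST j. active j x)" for x
  have "active (LEAST j. active j x) x" for x
  proof (rule LeastI_ex)
    obtain i where "i \<in> I" "max_affine I y c x = inner x (y i) - c i"
      using max_affine_attained assms by blast
    then show "\<exists>j. active j x" using \<open>set ids = I\<close> by (auto simp: active_def in_set_conv_nth)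
  qed
  then have "\<kappa> x \<in> I \<and> inner x (y (\<kappa> x)) - c (\<kappa> x) = max_affine I y c x" for x
    using \<open>set ids = I\<close> by (auto simp: \<kappa>_def active_def)
  moreover have "(\<lambda>x. LEAST j. active j x) \<in> measurable borel (count_space UNIV)"
    unfolding active_def using assms(1) by measurable
  then have "(\<lambda>x. y (\<kappa> x)) \<in> borel_measurable borel"
    unfolding \<kappa>_def by (rule measurable_compose) simp
  ultimately show ?thesis using that by blast
qed

section \<open>Borel probability measures\<close>

lemma borel_probD:
  assumes "\<alpha> \<in> borel_prob"
  shows "prob_space \<alpha>" "sets \<alpha> = sets borel" "space \<alpha> = UNIV"
  using assms sets_eq_imp_space_eq[of \<alpha> borel] by (auto simp: borel_prob_def)

lemma measurable_borel_prob:
  assumes "\<alpha> \<in> borel_prob" "f \<in> measurable borel N"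
  shows "f \<in> measurable \<alpha> N"
  using assms measurable_cong_sets[of \<alpha> borel N N] by (auto simp: borel_prob_def)

lemma integrable_linear_growth:
  fixes \<alpha> :: "'a::euclidean_space measure" and F :: "'a \<Rightarrow> real"
  assumes \<alpha>: "\<alpha> \<in> borel_prob" and "integrable \<alpha> norm"
    and "F \<in> borel_measurable borel" and "\<And>x. \<bar>F x\<bar> \<le> a * norm x + b"
  shows "integrable \<alpha> F"
proof (rule Bochner_Integration.integrable_bound)
  interpret prob_space \<alpha> using borel_probD[OF \<alpha>] by simp
  show "integrable \<alpha> (\<lambda>x. a * norm x + b)" using assms(2) by simp
  show "F \<in> borel_measurable \<alpha>" using measurable_borel_prob[OF \<alpha> assms(3)] .
  show "AE x in \<alpha>. norm (F x) \<le> norm (a * norm x + b)"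
    using assms(4) by (intro AE_I2) (metis abs_ge_self order_trans real_norm_def)
qed

lemma integral_tendsto_linear_growth:
  fixes \<alpha> :: "'a::euclidean_space measure" and f :: "'a \<Rightarrow> real"
  assumes \<alpha>: "\<alpha> \<in> borel_prob" and "integrable \<alpha> norm"
    and "f \<in> borel_measurable borel" and "\<And>i. s i \<in> borel_measurable borel"
    and "\<And>x. (\<lambda>i. s i x) \<longlonglongrightarrow> f x" and "\<And>i x. \<bar>s i x\<bar> \<le> a * norm x + b"
  shows "(\<lambda>i. integral\<^sup>L \<alpha> (s i)) \<longlonglongrightarrow> integral\<^sup>L \<alpha> f"
proof (rule integral_dominated_convergence)
  interpret prob_space \<alpha> using borel_probD[OF \<alpha>] by simp
  show "integrable \<alpha> (\<lambda>x. a * norm x + b)" using assms(2) by simp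
  show "f \<in> borel_measurable \<alpha>" "\<And>i. s i \<in> borel_measurable \<alpha>"
    using measurable_borel_prob[OF \<alpha>] assms(3,4) by auto
  show "AE x in \<alpha>. (\<lambda>i. s i x) \<longlonglongrightarrow> f x" using assms(5) by simp
  show "AE x in \<alpha>. norm (s i x) \<le> a * norm x + b" for i using assms(6) by simp
qed

lemma integrable_convex_lip1:
  assumes "\<alpha> \<in> borel_prob" "integrable \<alpha> norm" "f \<in> convex_lip1"
  shows "integrable \<alpha> f"
  using convex_lip1_abs_diff_le[OF assms(3), of _ 0]
  by (intro integrable_linear_growth[OF assms(1,2) borel_measurable_convex_lip1[OF assms(3)], of 1 "\<bar>f 0\<bar>"])
    (smt (verit) mult_1 diff_zero)

lemma abs_integral_convex_lip1_le:
  assumes \<alpha>: "\<alpha> \<in> borel_prob" and "integrable \<alpha> norm" "f \<in> convex_lip1"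
  shows "\<bar>integral\<^sup>L \<alpha> f - f 0\<bar> \<le> integral\<^sup>L \<alpha> norm"
proof -
  interpret prob_space \<alpha> using borel_probD[OF \<alpha>] by simp
  have "\<bar>integral\<^sup>L \<alpha> (\<lambda>x. f x - f 0)\<bar> \<le> integral\<^sup>L \<alpha> norm"
    using convex_lip1_abs_diff_le[OF assms(3), of _ 0] integrable_convex_lip1[OF assms] assms(2)
    by (intro integral_abs_bound_integral) auto
  then show ?thesis using integrable_convex_lip1[OF assms] by (simp add: prob_space)
qed

lemma borel_measurable_finite_support:
  fixes \<phi> :: "'a::euclidean_space \<Rightarrow> real"
  assumes "finite Y"
  shows "(\<lambda>w. if w \<in> Y then \<phi> w else 0) \<in> borel_measurable borel"
proof -
  have "(\<Sum>u\<in>Y. \<phi> u * indicator {u} w) = (\<Sum>u\<in>Y. if u = w then \<phi> u else 0)" for w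
    by (intro sum.cong) (auto simp: indicator_def)
  then have "(\<Sum>u\<in>Y. \<phi> u * indicator {u} w) = (if w \<in> Y then \<phi> w else 0)" for w
    using assms by (simp add: sum.delta')
  moreover have "(\<lambda>w. \<Sum>u\<in>Y. \<phi> u * indicator {u} w) \<in> borel_measurable borel" by measurable
  ultimately show ?thesis by simp
qed

lemma integral_finite_valued_comp:
  fixes \<alpha> :: "'a::euclidean_space measure" and T :: "'a \<Rightarrow> 'b::euclidean_space"
  assumes \<alpha>: "\<alpha> \<in> borel_prob" and "T \<in> borel_measurable borel" and "finite Z"
  shows "integrable \<alpha> (\<lambda>y. if T y \<in> Z then v (T y) else 0)"
    and "integral\<^sup>L \<alpha> (\<lambda>y. if T y \<in> Z then v (T y) else 0) = (\<Sum>z\<in>Z. v z * measure \<alpha> (T -` {z}))"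
proof -
  interpret prob_space \<alpha> using borel_probD[OF \<alpha>] by simp
  have "(\<Sum>z\<in>Z. v z * indicator (T -` {z}) y) = (\<Sum>z\<in>Z. if z = T y then v z else 0)" for y
    by (intro sum.cong) (auto simp: indicator_def)
  then have "(\<Sum>z\<in>Z. v z * indicator (T -` {z}) y) = (if T y \<in> Z then v (T y) else 0)" for y
    using assms(3) by (simp add: sum.delta')
  then have eq: "(\<lambda>y. if T y \<in> Z then v (T y) else 0) = (\<lambda>y. \<Sum>z\<in>Z. v z * indicator (T -` {z}) y)"
    by simp
  have "T -` {z} \<in> sets \<alpha>" for z using assms(2) borel_probD[OF \<alpha>] by (simp add: measurable_sets_borel)
  then have int: "integrable \<alpha> (\<lambda>y. v z * indicator (T -` {z}) y)" for z
    by (intro integrable_mult_right integrable_real_indicator) (auto simp: emeasure_eq_measure)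
  show "integrable \<alpha> (\<lambda>y. if T y \<in> Z then v (T y) else 0)" unfolding eq using int by auto
  show "integral\<^sup>L \<alpha> (\<lambda>y. if T y \<in> Z then v (T y) else 0) = (\<Sum>z\<in>Z. v z * measure \<alpha> (T -` {z}))"
    unfolding eq using int borel_probD(3)[OF \<alpha>] by (subst Bochner_Integration.integral_sum) auto
qed

lemma null_sets_hyperplane:
  fixes \<nu> :: "'a::euclidean_space measure"
  assumes "absolutely_continuous lborel \<nu>" "a \<noteq> 0"
  shows "{x. inner a x = c} \<in> null_sets \<nu>"
proof -
  have borel: "{x. inner a x = c} \<in> sets borel" by (intro borel_closed closed_hyperplane)
  then have "{x. inner a x = c} \<in> null_sets lebesgue"
    using negligible_hyperplane[of a c] assms(2) negligible_iff_null_sets[of "{x. inner a x = c}"] by auto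
  then have "{x. inner a x = c} \<in> null_sets lborel"
    using null_sets_completion_iff[OF borel[folded sets_lborel]] by simp
  then show ?thesis using assms(1) unfolding absolutely_continuous_def by blast
qed

lemma prob_unit_ball_borel_prob: "\<rho> \<in> prob_unit_ball \<Longrightarrow> \<rho> \<in> borel_prob"
  by (simp add: prob_unit_ball_def)

lemma AE_norm_le_1_prob_unit_ball:
  fixes \<rho> :: "'a::euclidean_space measure"
  assumes "\<rho> \<in> prob_unit_ball"
  shows "AE y in \<rho>. norm y \<le> 1"
proof -
  have sets: "sets \<rho> = sets borel" and supp: "measure_support \<rho> \<subseteq> cball 0 1"
    using assms by (auto simp: prob_unit_ball_def borel_prob_def)
  define F where "F = {ball x e | x e. e > 0 \<and> emeasure \<rho> (ball x e) = 0}"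
  obtain F' where F': "F' \<subseteq> F" "countable F'" "\<Union>F' = \<Union>F"
    using Lindelof[of F] unfolding F_def by auto
  have "\<Union>F' \<in> null_sets \<rho>"
    using F' sets unfolding F_def by (intro null_sets_UN'[of F' id, simplified]) (auto simp: null_sets_def)
  moreover have "{y. \<not> norm y \<le> 1} \<subseteq> \<Union>F'"
  proof
    fix y :: 'a assume "y \<in> {y. \<not> norm y \<le> 1}"
    then have "y \<notin> measure_support \<rho>" using supp by auto
    then obtain e where "e > 0" "emeasure \<rho> (ball y e) = 0"
      unfolding measure_support_def by auto
    then have "ball y e \<in> F" unfolding F_def by blast
    then show "y \<in> \<Union>F'" using F'(3) \<open>e > 0\<close> by (metis UnionI centre_in_ball)
  qed
  ultimately show ?thesis by (intro AE_I'[of "\<Union>F'"]) auto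
qed

lemma distr_in_prob_unit_ball:
  fixes \<alpha> :: "'a::euclidean_space measure"
  assumes \<alpha>: "\<alpha> \<in> borel_prob" and g: "g \<in> borel_measurable borel" and "\<And>x. norm (g x) \<le> 1"
  shows "distr \<alpha> borel g \<in> prob_unit_ball"
proof -
  have gm: "g \<in> measurable \<alpha> borel" using measurable_borel_prob[OF \<alpha> g] .
  have "z \<in> cball 0 1" if "z \<in> measure_support (distr \<alpha> borel g)" for z
  proof (rule ccontr)
    assume "z \<notin> cball 0 1"
    have "g x \<notin> ball z (norm z - 1)" for x
      using norm_triangle_ineq2[of z "g x"] assms(3)[of x] by (simp add: dist_norm)
    then have "g -` ball z (norm z - 1) \<inter> space \<alpha> = {}" by auto
    then have "emeasure (distr \<alpha> borel g) (ball z (norm z - 1)) = 0"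
      by (simp add: emeasure_distr[OF gm])
    moreover have "norm z - 1 > 0" using \<open>z \<notin> cball 0 1\<close> by simp
    then have "emeasure (distr \<alpha> borel g) (ball z (norm z - 1)) > 0"
      using that unfolding measure_support_def by blast
    ultimately show False by simp
  qed
  then show ?thesis
    using prob_space.prob_space_distr[OF borel_probD(1)[OF \<alpha>] gm]
    by (auto simp: prob_unit_ball_def borel_prob_def)
qed

section \<open>Couplings and the correlation cost\<close>

context
  fixes \<pi> :: "('a::euclidean_space \<times> 'a) measure" and \<alpha> \<rho>
  assumes coupling: "\<pi> \<in> couplings \<alpha> \<rho>"
begin

lemma distr_coupling_fst: "distr \<pi> borel fst = \<alpha>"
  and distr_coupling_snd: "distr \<pi> borel snd = \<rho>"
  using coupling by (simp_all add: couplings_def)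

lemma measurable_coupling: "f \<in> measurable (borel \<Otimes>\<^sub>M borel) N \<Longrightarrow> f \<in> measurable \<pi> N"
  using coupling measurable_cong_sets[of \<pi> "borel \<Otimes>\<^sub>M borel" N N] by (simp add: couplings_def)

lemma coupling_integral_fst:
  fixes g :: "'a \<Rightarrow> real"
  assumes "g \<in> borel_measurable borel"
  shows "integral\<^sup>L \<pi> (\<lambda>p. g (fst p)) = integral\<^sup>L \<alpha> g"
    and "integrable \<pi> (\<lambda>p. g (fst p)) \<longleftrightarrow> integrable \<alpha> g"
  using integral_distr[OF measurable_coupling[OF measurable_fst] assms]
    integrable_distr_eq[OF measurable_coupling[OF measurable_fst] assms]
  by (simp_all add: distr_coupling_fst)

lemma coupling_integral_snd:
  fixes g :: "'a \<Rightarrow> real"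
  assumes "g \<in> borel_measurable borel"
  shows "integral\<^sup>L \<pi> (\<lambda>p. g (snd p)) = integral\<^sup>L \<rho> g"
    and "integrable \<pi> (\<lambda>p. g (snd p)) \<longleftrightarrow> integrable \<rho> g"
  using integral_distr[OF measurable_coupling[OF measurable_snd] assms]
    integrable_distr_eq[OF measurable_coupling[OF measurable_snd] assms]
  by (simp_all add: distr_coupling_snd)

lemma AE_coupling_snd:
  assumes "AE y in \<rho>. P y" "{y. P y} \<in> sets borel"
  shows "AE p in \<pi>. P (snd p)"
proof -
  have "{y \<in> space borel. P y} \<in> sets borel" using assms(2) by simp
  moreover have "AE y in distr \<pi> borel snd. P y" unfolding distr_coupling_snd by (rule assms(1))
  ultimately show ?thesis using AE_distr_iff[OF measurable_coupling[OF measurable_snd]] by blast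
qed

end

lemma emeasure_density_pair_Times:
  fixes \<nu> \<rho> :: "'a::euclidean_space measure" and w :: "'a \<times> 'a \<Rightarrow> ennreal"
  assumes \<nu>: "\<nu> \<in> borel_prob" and \<rho>: "\<rho> \<in> borel_prob"
    and w: "w \<in> borel_measurable (borel \<Otimes>\<^sub>M borel)"
    and marginal_fst: "AE x in \<nu>. (\<integral>\<^sup>+y. w (x, y) \<partial>\<rho>) = 1"
    and marginal_snd: "AE y in \<rho>. (\<integral>\<^sup>+x. w (x, y) \<partial>\<nu>) = 1"
    and S: "S \<in> sets borel"
  shows "emeasure (density (\<nu> \<Otimes>\<^sub>M \<rho>) w) (S \<times> UNIV) = emeasure \<nu> S"
    and "emeasure (density (\<nu> \<Otimes>\<^sub>M \<rho>) w) (UNIV \<times> S) = emeasure \<rho> S"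
proof -
  interpret n: prob_space \<nu> using borel_probD[OF \<nu>] by simp
  interpret r: prob_space \<rho> using borel_probD[OF \<rho>] by simp
  interpret pair_sigma_finite \<nu> \<rho> ..
  have sets: "sets (\<nu> \<Otimes>\<^sub>M \<rho>) = sets (borel \<Otimes>\<^sub>M borel)"
    using borel_probD(2)[OF \<nu>] borel_probD(2)[OF \<rho>] by (intro sets_pair_measure_cong)
  have [measurable]: "w \<in> borel_measurable (\<nu> \<Otimes>\<^sub>M \<rho>)"
    using w unfolding measurable_cong_sets[OF sets refl] .
  have [measurable]: "S \<times> UNIV \<in> sets (\<nu> \<Otimes>\<^sub>M \<rho>)" "UNIV \<times> S \<in> sets (\<nu> \<Otimes>\<^sub>M \<rho>)"
    using S sets by auto
  have "emeasure (density (\<nu> \<Otimes>\<^sub>M \<rho>) w) (S \<times> UNIV)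
      = (\<integral>\<^sup>+p. w p * indicator (S \<times> UNIV) p \<partial>(\<nu> \<Otimes>\<^sub>M \<rho>))"
    by (rule emeasure_density) measurable
  also have "\<dots> = (\<integral>\<^sup>+x. \<integral>\<^sup>+y. w (x, y) * indicator (S \<times> UNIV) (x, y) \<partial>\<rho> \<partial>\<nu>)"
    by (rule r.nn_integral_fst[symmetric]) measurable
  also have "\<dots> = (\<integral>\<^sup>+x. indicator S x \<partial>\<nu>)"
    using marginal_fst
    by (intro nn_integral_cong_AE) (auto simp: indicator_times nn_integral_multc measurable_Pair2)
  finally show "emeasure (density (\<nu> \<Otimes>\<^sub>M \<rho>) w) (S \<times> UNIV) = emeasure \<nu> S"
    using S borel_probD(2)[OF \<nu>] by simp
  have "emeasure (density (\<nu> \<Otimes>\<^sub>M \<rho>) w) (UNIV \<times> S)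
      = (\<integral>\<^sup>+p. w p * indicator (UNIV \<times> S) p \<partial>(\<nu> \<Otimes>\<^sub>M \<rho>))"
    by (rule emeasure_density) measurable
  also have "\<dots> = (\<integral>\<^sup>+y. \<integral>\<^sup>+x. w (x, y) * indicator (UNIV \<times> S) (x, y) \<partial>\<nu> \<partial>\<rho>)"
    by (rule nn_integral_snd[symmetric]) measurable
  also have "\<dots> = (\<integral>\<^sup>+y. indicator S y \<partial>\<rho>)"
    using marginal_snd
    by (intro nn_integral_cong_AE) (auto simp: indicator_times nn_integral_multc measurable_Pair1)
  finally show "emeasure (density (\<nu> \<Otimes>\<^sub>M \<rho>) w) (UNIV \<times> S) = emeasure \<rho> S"
    using S borel_probD(2)[OF \<rho>] by simp
qed

lemma density_in_couplings:
  fixes \<nu> \<rho> :: "'a::euclidean_space measure" and w :: "'a \<times> 'a \<Rightarrow> ennreal"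
  assumes \<nu>: "\<nu> \<in> borel_prob" and \<rho>: "\<rho> \<in> borel_prob"
    and w: "w \<in> borel_measurable (borel \<Otimes>\<^sub>M borel)"
    and marginal_fst: "AE x in \<nu>. (\<integral>\<^sup>+y. w (x, y) \<partial>\<rho>) = 1"
    and marginal_snd: "AE y in \<rho>. (\<integral>\<^sup>+x. w (x, y) \<partial>\<nu>) = 1"
  shows "density (\<nu> \<Otimes>\<^sub>M \<rho>) w \<in> couplings \<nu> \<rho>"
proof -
  let ?\<pi> = "density (\<nu> \<Otimes>\<^sub>M \<rho>) w"
  note marginals = emeasure_density_pair_Times[OF assms]
  have "sets (\<nu> \<Otimes>\<^sub>M \<rho>) = sets (borel \<Otimes>\<^sub>M borel)"
    using borel_probD(2)[OF \<nu>] borel_probD(2)[OF \<rho>] by (intro sets_pair_measure_cong)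
  then have sets: "sets ?\<pi> = sets (borel \<Otimes>\<^sub>M borel)" by simp
  have space: "space (\<nu> \<Otimes>\<^sub>M \<rho>) = UNIV"
    using borel_probD(3)[OF \<nu>] borel_probD(3)[OF \<rho>] by (simp add: space_pair_measure)
  have fst_meas: "fst \<in> measurable ?\<pi> borel" and snd_meas: "snd \<in> measurable ?\<pi> borel"
    using measurable_cong_sets[of ?\<pi> "borel \<Otimes>\<^sub>M borel" borel borel] sets by auto
  have "distr ?\<pi> borel fst = \<nu>"
    using marginals(1) borel_probD(2)[OF \<nu>]
    by (intro measure_eqI) (auto simp: emeasure_distr[OF fst_meas] space vimage_fst)
  moreover have "distr ?\<pi> borel snd = \<rho>"
    using marginals(2) borel_probD(2)[OF \<rho>]
    by (intro measure_eqI) (auto simp: emeasure_distr[OF snd_meas] space vimage_snd)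
  moreover have "prob_space ?\<pi>"
    using marginals(1)[of UNIV] prob_space.emeasure_space_1[OF borel_probD(1)[OF \<nu>]] borel_probD(3)[OF \<nu>]
    by (intro prob_spaceI) (simp add: space)
  ultimately show ?thesis using sets by (simp add: couplings_def)
qed

lemma pair_measure_in_couplings:
  fixes \<alpha> \<rho> :: "'a::euclidean_space measure"
  assumes "\<alpha> \<in> borel_prob" "\<rho> \<in> borel_prob"
  shows "\<alpha> \<Otimes>\<^sub>M \<rho> \<in> couplings \<alpha> \<rho>"
proof -
  have "emeasure \<alpha> (space \<alpha>) = 1" "emeasure \<rho> (space \<rho>) = 1"
    using prob_space.emeasure_space_1 borel_probD(1) assms by blast+
  then show ?thesis using density_in_couplings[OF assms, of "\<lambda>_. 1"] by (simp add: density_1)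
qed

lemma distr_graph_in_couplings:
  fixes \<alpha> :: "'a::euclidean_space measure" and g :: "'a \<Rightarrow> 'a"
  assumes \<alpha>: "\<alpha> \<in> borel_prob" and g: "g \<in> borel_measurable borel"
  shows "distr \<alpha> (borel \<Otimes>\<^sub>M borel) (\<lambda>x. (x, g x)) \<in> couplings \<alpha> (distr \<alpha> borel g)"
proof -
  have m: "(\<lambda>x. (x, g x)) \<in> measurable \<alpha> (borel \<Otimes>\<^sub>M borel)"
    using g by (intro measurable_borel_prob[OF \<alpha>]) simp
  have "distr (distr \<alpha> (borel \<Otimes>\<^sub>M borel) (\<lambda>x. (x, g x))) borel fst = distr \<alpha> borel (\<lambda>x. x)"
    using m by (subst distr_distr) (simp_all add: comp_def)
  also have "\<dots> = \<alpha>" using borel_probD(2)[OF \<alpha>] by (intro distr_id2) simp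
  finally show ?thesis
    using m prob_space.prob_space_distr[OF borel_probD(1)[OF \<alpha>] m]
    by (simp add: couplings_def distr_distr comp_def)
qed

lemma AE_abs_inner_le_coupling:
  assumes "\<pi> \<in> couplings \<alpha> \<rho>" "\<rho> \<in> prob_unit_ball"
  shows "AE p in \<pi>. \<bar>case p of (x, y) \<Rightarrow> inner x y\<bar> \<le> norm (fst p)"
proof -
  have "AE p in \<pi>. norm (snd p) \<le> 1"
    by (rule AE_coupling_snd[OF assms(1) AE_norm_le_1_prob_unit_ball[OF assms(2)]]) measurable
  then show ?thesis
  proof (rule AE_mp, intro AE_I2 impI)
    fix p :: "'a \<times> 'a" assume "norm (snd p) \<le> 1"
    have "\<bar>inner (fst p) (snd p)\<bar> \<le> norm (fst p) * norm (snd p)" by (rule Cauchy_Schwarz_ineq2)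
    also have "\<dots> \<le> norm (fst p)" using \<open>norm (snd p) \<le> 1\<close> by (simp add: mult_left_le)
    finally show "\<bar>case p of (x, y) \<Rightarrow> inner x y\<bar> \<le> norm (fst p)" by (simp add: case_prod_beta)
  qed
qed

lemma integrable_inner_coupling:
  assumes "\<pi> \<in> couplings \<alpha> \<rho>" "\<rho> \<in> prob_unit_ball" "integrable \<alpha> norm"
  shows "integrable \<pi> (\<lambda>(x, y). inner x y)"
proof (rule Bochner_Integration.integrable_bound)
  show "integrable \<pi> (\<lambda>p. norm (fst p))"
    using coupling_integral_fst(2)[OF assms(1), of norm] assms(3) by simp
  show "(\<lambda>(x, y). inner x y) \<in> borel_measurable \<pi>" by (intro measurable_coupling[OF assms(1)]) simp
  show "AE p in \<pi>. norm ((\<lambda>(x, y). inner x y) p) \<le> norm (norm (fst p))"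
    using AE_abs_inner_le_coupling[OF assms(1,2)] by simp
qed

lemma abs_integral_inner_coupling_le:
  assumes "\<pi> \<in> couplings \<alpha> \<rho>" "\<rho> \<in> prob_unit_ball" "integrable \<alpha> norm"
  shows "\<bar>\<integral>(x, y). inner x y \<partial>\<pi>\<bar> \<le> integral\<^sup>L \<alpha> norm"
proof -
  have "\<bar>\<integral>(x, y). inner x y \<partial>\<pi>\<bar> \<le> (\<integral>p. \<bar>case p of (x, y) \<Rightarrow> inner x y\<bar> \<partial>\<pi>)"
    using integral_norm_bound[of \<pi> "\<lambda>(x, y). inner x y"] by simp
  also have "\<dots> \<le> (\<integral>p. norm (fst p) \<partial>\<pi>)"
    using AE_abs_inner_le_coupling[OF assms(1,2)] integrable_inner_coupling[OF assms]
      coupling_integral_fst(2)[OF assms(1), of norm] assms(3)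
    by (intro integral_mono_AE) auto
  finally show ?thesis using coupling_integral_fst(1)[OF assms(1), of norm] by simp
qed

lemma couplings_nonempty: "\<alpha> \<in> borel_prob \<Longrightarrow> \<rho> \<in> borel_prob \<Longrightarrow> couplings \<alpha> \<rho> \<noteq> {}"
  using pair_measure_in_couplings by blast

lemma integral_inner_le_corr_cost:
  assumes "\<rho> \<in> prob_unit_ball" "integrable \<alpha> norm" "\<pi> \<in> couplings \<alpha> \<rho>"
  shows "(\<integral>(x, y). inner x y \<partial>\<pi>) \<le> corr_cost \<alpha> \<rho>"
  unfolding corr_cost_def
proof (rule cSUP_upper[OF assms(3)])
  show "bdd_above ((\<lambda>\<pi>. \<integral>(x, y). inner x y \<partial>\<pi>) ` couplings \<alpha> \<rho>)"
    using abs_integral_inner_coupling_le[OF _ assms(1,2)]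
    by (intro bdd_aboveI[of _ "integral\<^sup>L \<alpha> norm"]) (auto simp: abs_le_iff)
qed

lemma corr_cost_le_norm_moment:
  assumes "\<alpha> \<in> borel_prob" "\<rho> \<in> prob_unit_ball" "integrable \<alpha> norm"
  shows "corr_cost \<alpha> \<rho> \<le> integral\<^sup>L \<alpha> norm"
  unfolding corr_cost_def
  using couplings_nonempty[OF assms(1) prob_unit_ball_borel_prob[OF assms(2)]]
    abs_integral_inner_coupling_le[OF _ assms(2,3)]
  by (intro cSUP_least) (auto simp: abs_le_iff)

lemma neg_norm_moment_le_corr_cost:
  assumes "\<alpha> \<in> borel_prob" "\<rho> \<in> prob_unit_ball" "integrable \<alpha> norm"
  shows "- integral\<^sup>L \<alpha> norm \<le> corr_cost \<alpha> \<rho>"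
proof -
  have "\<alpha> \<Otimes>\<^sub>M \<rho> \<in> couplings \<alpha> \<rho>"
    using pair_measure_in_couplings[OF assms(1) prob_unit_ball_borel_prob[OF assms(2)]] .
  then show ?thesis
    using abs_integral_inner_coupling_le[OF _ assms(2,3)] integral_inner_le_corr_cost[OF assms(2,3)]
    by (smt (verit))
qed

lemma corr_cost_le_integral_add:
  fixes \<alpha> \<rho> :: "'a::euclidean_space measure" and F \<psi> :: "'a \<Rightarrow> real"
  assumes \<alpha>: "\<alpha> \<in> borel_prob" and \<rho>: "\<rho> \<in> prob_unit_ball" and "integrable \<alpha> norm"
    and F: "integrable \<alpha> F" "F \<in> borel_measurable borel"
    and \<psi>: "integrable \<rho> \<psi>" "\<psi> \<in> borel_measurable borel"
    and G: "G \<in> sets borel" "AE y in \<rho>. y \<in> G"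
    and le: "\<And>x y. y \<in> G \<Longrightarrow> inner x y \<le> F x + \<psi> y"
  shows "corr_cost \<alpha> \<rho> \<le> integral\<^sup>L \<alpha> F + integral\<^sup>L \<rho> \<psi>"
  unfolding corr_cost_def
proof (rule cSUP_least[OF couplings_nonempty[OF \<alpha> prob_unit_ball_borel_prob[OF \<rho>]]])
  fix \<pi> assume \<pi>: "\<pi> \<in> couplings \<alpha> \<rho>"
  have intF: "integrable \<pi> (\<lambda>p. F (fst p))" using coupling_integral_fst(2)[OF \<pi> F(2)] F(1) by simp
  have int\<psi>: "integrable \<pi> (\<lambda>p. \<psi> (snd p))" using coupling_integral_snd(2)[OF \<pi> \<psi>(2)] \<psi>(1) by simp
  have "(\<integral>(x, y). inner x y \<partial>\<pi>) \<le> (\<integral>p. F (fst p) + \<psi> (snd p) \<partial>\<pi>)"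
    using AE_coupling_snd[OF \<pi> G(2)] G(1) le
    by (intro integral_mono_AE integrable_inner_coupling[OF \<pi> \<rho> assms(3)]
        Bochner_Integration.integrable_add intF int\<psi>) (auto elim!: AE_mp)
  also have "\<dots> = integral\<^sup>L \<alpha> F + integral\<^sup>L \<rho> \<psi>"
    using coupling_integral_fst(1)[OF \<pi> F(2)] coupling_integral_snd(1)[OF \<pi> \<psi>(2)] intF int\<psi> by simp
  finally show "(\<integral>(x, y). inner x y \<partial>\<pi>) \<le> integral\<^sup>L \<alpha> F + integral\<^sup>L \<rho> \<psi>" .
qed

lemma integral_le_corr_cost:
  fixes \<alpha> \<rho> :: "'a::euclidean_space measure" and h :: "'a \<Rightarrow> real"
  assumes \<rho>: "\<rho> \<in> prob_unit_ball" and "integrable \<alpha> norm" and \<pi>: "\<pi> \<in> couplings \<alpha> \<rho>"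
    and h: "integrable \<alpha> h" "h \<in> borel_measurable borel"
    and le: "AE p in \<pi>. h (fst p) \<le> inner (fst p) (snd p)"
  shows "integral\<^sup>L \<alpha> h \<le> corr_cost \<alpha> \<rho>"
proof -
  have "integral\<^sup>L \<alpha> h = (\<integral>p. h (fst p) \<partial>\<pi>)" using coupling_integral_fst(1)[OF \<pi> h(2)] by simp
  also have "\<dots> \<le> (\<integral>(x, y). inner x y \<partial>\<pi>)"
    using le coupling_integral_fst(2)[OF \<pi> h(2)] h(1)
    by (intro integral_mono_AE integrable_inner_coupling[OF \<pi> \<rho> assms(2)]) (auto simp: case_prod_beta)
  also have "\<dots> \<le> corr_cost \<alpha> \<rho>" by (rule integral_inner_le_corr_cost[OF \<rho> assms(2) \<pi>])
  finally show ?thesis .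
qed

lemma integral_inner_graph_le_corr_cost:
  fixes \<alpha> :: "'a::euclidean_space measure" and g :: "'a \<Rightarrow> 'a"
  assumes \<alpha>: "\<alpha> \<in> borel_prob" and g: "g \<in> borel_measurable borel"
    and "distr \<alpha> borel g \<in> prob_unit_ball" and "integrable \<alpha> norm"
  shows "(\<integral>x. inner x (g x) \<partial>\<alpha>) \<le> corr_cost \<alpha> (distr \<alpha> borel g)"
proof -
  have "(\<lambda>x. (x, g x)) \<in> measurable \<alpha> (borel \<Otimes>\<^sub>M borel)"
    using g by (intro measurable_borel_prob[OF \<alpha>]) simp
  moreover have "(\<lambda>(x, w). inner x w) \<in> borel_measurable (borel \<Otimes>\<^sub>M (borel :: 'a measure))"
    by simp
  ultimately have "(\<integral>(x, w). inner x w \<partial>distr \<alpha> (borel \<Otimes>\<^sub>M borel) (\<lambda>x. (x, g x)))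
      = (\<integral>x. (\<lambda>(x, w). inner x w) (x, g x) \<partial>\<alpha>)"
    by (rule integral_distr)
  then show ?thesis
    using integral_inner_le_corr_cost[OF assms(3,4) distr_graph_in_couplings[OF \<alpha> g]] by simp
qed

lemma nn_integral_normalized_indicator:
  assumes "S \<in> sets M" "emeasure M S = ennreal m" "0 < m"
  shows "(\<integral>\<^sup>+y. ennreal (1 / m) * indicator S y \<partial>M) = 1"
  using assms by (simp add: nn_integral_cmult_indicator flip: ennreal_mult)

lemma coupling_matching_cells:
  fixes \<nu> \<rho> :: "'a::euclidean_space measure" and A T :: "'a \<Rightarrow> 'a"
  assumes \<nu>: "\<nu> \<in> borel_prob" and \<rho>: "\<rho> \<in> borel_prob"
    and Z: "finite Z" and A: "A \<in> borel_measurable borel" "\<And>x. A x \<in> Z"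
    and T: "T \<in> borel_measurable borel" "AE y in \<rho>. T y \<in> Z"
    and mass_eq: "\<And>z. z \<in> Z \<Longrightarrow> measure \<nu> (A -` {z}) = measure \<rho> (T -` {z})"
    and mass_pos: "\<And>z. z \<in> Z \<Longrightarrow> measure \<rho> (T -` {z}) > 0"
  shows "\<exists>\<pi>\<in>couplings \<nu> \<rho>. AE p in \<pi>. A (fst p) = T (snd p)"
proof -
  interpret n: prob_space \<nu> using borel_probD[OF \<nu>] by simp
  interpret r: prob_space \<rho> using borel_probD[OF \<rho>] by simp
  define w where "w p = (if A (fst p) = T (snd p) then ennreal (1 / measure \<rho> (T -` {A (fst p)})) else 0)"
    for p
  have [measurable]: "(\<lambda>x. measure \<rho> (T -` {A x})) \<in> borel_measurable borel"
    using measurable_compose[OF A(1) borel_measurable_finite_support[OF Z, of "\<lambda>z. measure \<rho> (T -` {z})"]]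
      A(2) by simp
  have w_meas: "w \<in> borel_measurable (borel \<Otimes>\<^sub>M borel)"
    unfolding w_def[abs_def] using A(1) T(1) by measurable
  moreover have "AE x in \<nu>. (\<integral>\<^sup>+y. w (x, y) \<partial>\<rho>) = 1"
  proof (rule AE_I2)
    fix x
    have "(\<integral>\<^sup>+y. w (x, y) \<partial>\<rho>) = (\<integral>\<^sup>+y. ennreal (1 / measure \<rho> (T -` {A x})) * indicator (T -` {A x}) y \<partial>\<rho>)"
      by (intro nn_integral_cong) (auto simp: w_def indicator_def)
    also have "\<dots> = 1"
      using T(1) mass_pos[OF A(2)[of x]] borel_probD(2)[OF \<rho>]
      by (intro nn_integral_normalized_indicator) (auto simp: measurable_sets_borel r.emeasure_eq_measure)
    finally show "(\<integral>\<^sup>+y. w (x, y) \<partial>\<rho>) = 1" .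
  qed
  moreover have "AE y in \<rho>. (\<integral>\<^sup>+x. w (x, y) \<partial>\<nu>) = 1"
    using T(2)
  proof (rule AE_mp, intro AE_I2 impI)
    fix y assume "T y \<in> Z"
    have "(\<integral>\<^sup>+x. w (x, y) \<partial>\<nu>) = (\<integral>\<^sup>+x. ennreal (1 / measure \<rho> (T -` {T y})) * indicator (A -` {T y}) x \<partial>\<nu>)"
      by (intro nn_integral_cong) (auto simp: w_def indicator_def)
    also have "\<dots> = 1"
      using A(1) mass_pos[OF \<open>T y \<in> Z\<close>] mass_eq[OF \<open>T y \<in> Z\<close>] borel_probD(2)[OF \<nu>]
      by (intro nn_integral_normalized_indicator) (auto simp: measurable_sets_borel n.emeasure_eq_measure)
    finally show "(\<integral>\<^sup>+x. w (x, y) \<partial>\<nu>) = 1" .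
  qed
  ultimately have "density (\<nu> \<Otimes>\<^sub>M \<rho>) w \<in> couplings \<nu> \<rho>"
    by (rule density_in_couplings[OF \<nu> \<rho>])
  moreover have "w \<in> borel_measurable (\<nu> \<Otimes>\<^sub>M \<rho>)"
    using w_meas borel_probD(2)[OF \<nu>] borel_probD(2)[OF \<rho>]
    by (subst measurable_cong_sets[OF sets_pair_measure_cong refl]) auto
  then have "AE p in density (\<nu> \<Otimes>\<^sub>M \<rho>) w. A (fst p) = T (snd p)"
    unfolding AE_density[OF \<open>w \<in> borel_measurable (\<nu> \<Otimes>\<^sub>M \<rho>)\<close>] by (intro AE_I2) (simp add: w_def)
  ultimately show ?thesis by blast
qed

section \<open>Approximation from below by maxima of affine functions\<close>

lemma max_affine_conjugate:
  fixes y :: "'i \<Rightarrow> 'a::euclidean_space"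
  assumes I: "finite I" "I \<noteq> {}"
  obtains \<psi> where "\<psi> \<in> borel_measurable borel" "\<And>w. \<bar>\<psi> w\<bar> \<le> (\<Sum>i\<in>I. \<bar>c i\<bar>)"
    "\<And>x w. w \<in> y ` I \<Longrightarrow> inner x w \<le> max_affine I y c x + \<psi> w"
    "\<And>x i. i \<in> I \<Longrightarrow> inner x (y i) - c i = max_affine I y c x \<Longrightarrow> \<psi> (y i) = c i"
proof
  define \<psi> where "\<psi> w = (if w \<in> y ` I then Min (c ` {i \<in> I. y i = w}) else 0)" for w
  have attained: "\<exists>i\<in>I. y i = w \<and> \<psi> w = c i" if "w \<in> y ` I" for w
  proof -
    have "Min (c ` {i \<in> I. y i = w}) \<in> c ` {i \<in> I. y i = w}"
      using that I(1) by (intro Min_in) auto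
    then show ?thesis using that unfolding \<psi>_def by auto
  qed
  show "\<psi> \<in> borel_measurable borel"
    unfolding \<psi>_def[abs_def] using I(1) by (intro borel_measurable_finite_support) simp
  show "\<bar>\<psi> w\<bar> \<le> (\<Sum>i\<in>I. \<bar>c i\<bar>)" for w
  proof (cases "w \<in> y ` I")
    case True
    then obtain i where "i \<in> I" "\<psi> w = c i" using attained by blast
    then show ?thesis using I(1) member_le_sum[of i I "\<lambda>i. \<bar>c i\<bar>"] by simp
  qed (simp add: \<psi>_def sum_nonneg)
  show "inner x w \<le> max_affine I y c x + \<psi> w" if w: "w \<in> y ` I" for x w
  proof -
    obtain i where "i \<in> I" "y i = w" "\<psi> w = c i" using attained[OF w] by blast
    then show ?thesis using max_affine_ge[OF I(1), of i x y c] by simp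
  qed
  show "\<psi> (y i) = c i" if i: "i \<in> I" and active: "inner x (y i) - c i = max_affine I y c x" for x i
  proof -
    obtain j where j: "j \<in> I" "y j = y i" "\<psi> (y i) = c j" using attained[of "y i"] i by blast
    have "\<psi> (y i) \<le> c i" unfolding \<psi>_def using I(1) i by (auto intro!: Min_le)
    moreover have "c i \<le> c j" using max_affine_ge[OF I(1) j(1), of x y c] active j(2) by simp
    ultimately show ?thesis using j(3) by simp
  qed
qed

lemma corr_cost_diff_le_max_affine:
  fixes \<mu> \<nu> :: "'a::euclidean_space measure" and y :: "'i \<Rightarrow> 'a"
  assumes \<mu>: "\<mu> \<in> borel_prob" and \<nu>: "\<nu> \<in> borel_prob"
    and "integrable \<mu> norm" "integrable \<nu> norm"
    and I: "finite I" "I \<noteq> {}" and y: "\<And>i. i \<in> I \<Longrightarrow> norm (y i) \<le> 1"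
  shows "\<exists>\<rho>\<in>prob_unit_ball. corr_cost \<nu> \<rho> - corr_cost \<mu> \<rho>
    \<le> integral\<^sup>L \<nu> (max_affine I y c) - integral\<^sup>L \<mu> (max_affine I y c)"
proof -
  interpret m: prob_space \<mu> using borel_probD[OF \<mu>] by simp
  let ?F = "max_affine I y c"
  obtain \<kappa> where \<kappa>: "\<And>x. \<kappa> x \<in> I" "\<And>x. inner x (y (\<kappa> x)) - c (\<kappa> x) = ?F x"
    and g_meas: "(\<lambda>x. y (\<kappa> x)) \<in> borel_measurable borel"
    using max_affine_argmax_selector[OF I] by blast
  obtain \<psi> where \<psi>: "\<psi> \<in> borel_measurable borel" "\<And>w. \<bar>\<psi> w\<bar> \<le> (\<Sum>i\<in>I. \<bar>c i\<bar>)"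
    "\<And>x w. w \<in> y ` I \<Longrightarrow> inner x w \<le> ?F x + \<psi> w"
    "\<And>x i. i \<in> I \<Longrightarrow> inner x (y i) - c i = ?F x \<Longrightarrow> \<psi> (y i) = c i"
    using max_affine_conjugate[OF I] by blast
  define \<rho> where "\<rho> = distr \<mu> borel (\<lambda>x. y (\<kappa> x))"
  have \<rho>: "\<rho> \<in> prob_unit_ball"
    unfolding \<rho>_def using g_meas \<kappa>(1) y by (intro distr_in_prob_unit_ball[OF \<mu>]) auto
  have gm: "(\<lambda>x. y (\<kappa> x)) \<in> measurable \<mu> borel" by (rule measurable_borel_prob[OF \<mu> g_meas])
  interpret r: prob_space \<rho> using borel_probD(1) prob_unit_ball_borel_prob[OF \<rho>] by blast
  have F: "integrable \<mu> ?F" "integrable \<nu> ?F"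
    using integrable_convex_lip1[OF \<mu> assms(3) max_affine_in_convex_lip1[OF I y]]
      integrable_convex_lip1[OF \<nu> assms(4) max_affine_in_convex_lip1[OF I y]] by simp_all
  have "integrable \<rho> \<psi>"
    using \<psi>(1,2) by (intro r.integrable_const_bound[of _ "\<Sum>i\<in>I. \<bar>c i\<bar>"]) (auto simp: \<rho>_def)
  then have "corr_cost \<nu> \<rho> \<le> integral\<^sup>L \<nu> ?F + integral\<^sup>L \<rho> \<psi>"
  proof (rule corr_cost_le_integral_add[OF \<nu> \<rho> assms(4) F(2) borel_measurable_max_affine[OF I(1)]
        _ \<psi>(1) _ _ \<psi>(3)])
    show "y ` I \<in> sets borel" using I(1) by (simp add: borel_closed finite_imp_closed)
    show "AE w in \<rho>. w \<in> y ` I"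
      unfolding \<rho>_def using \<kappa>(1) I(1) by (subst AE_distr_iff[OF gm]) (auto simp: borel_closed finite_imp_closed)
  qed
  moreover have "integral\<^sup>L \<mu> ?F + integral\<^sup>L \<rho> \<psi> = (\<integral>x. inner x (y (\<kappa> x)) \<partial>\<mu>)"
  proof -
    have "integrable \<mu> (\<lambda>x. \<psi> (y (\<kappa> x)))"
      using \<psi>(2) measurable_compose[OF gm \<psi>(1)]
      by (intro m.integrable_const_bound[of _ "\<Sum>i\<in>I. \<bar>c i\<bar>"]) auto
    then have "integral\<^sup>L \<mu> ?F + integral\<^sup>L \<rho> \<psi> = (\<integral>x. ?F x + \<psi> (y (\<kappa> x)) \<partial>\<mu>)"
      using F(1) by (simp add: \<rho>_def integral_distr[OF gm \<psi>(1)])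
    also have "\<dots> = (\<integral>x. inner x (y (\<kappa> x)) \<partial>\<mu>)"
    proof (rule Bochner_Integration.integral_cong)
      show "?F x + \<psi> (y (\<kappa> x)) = inner x (y (\<kappa> x))" for x
        using \<kappa>(2)[of x] \<psi>(4)[OF \<kappa>(1) \<kappa>(2)] by simp
    qed simp
    finally show ?thesis .
  qed
  moreover have "(\<integral>x. inner x (y (\<kappa> x)) \<partial>\<mu>) \<le> corr_cost \<mu> \<rho>"
    unfolding \<rho>_def using integral_inner_graph_le_corr_cost[OF \<mu> g_meas] \<rho> assms(3) by (simp add: \<rho>_def)
  ultimately show ?thesis using \<rho> by force
qed

lemma convex_lip1_supporting_affine:
  assumes f: "f \<in> convex_lip1"
  obtains y where "norm y \<le> 1" "\<And>x. f p + inner (x - p) y \<le> f x"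
    "\<And>x. f x - 2 * norm (x - p) \<le> f p + inner (x - p) y"
proof -
  obtain y where y: "y \<in> subdiff f p"
    using subdiff_nonempty[of f p] f by (auto simp: convex_lip1_def)
  then have y1: "norm y \<le> 1" using f by (auto simp: convex_lip1_def)
  have below: "f p + inner (x - p) y \<le> f x" for x
  proof -
    have "inner y (x - p) \<le> f x - f p" using y unfolding subdiff_def by blast
    then show ?thesis by (simp add: inner_commute)
  qed
  have "\<bar>inner (x - p) y\<bar> \<le> norm (x - p)" for x
    using Cauchy_Schwarz_ineq2[of "x - p" y] y1 by (metis mult_left_le norm_ge_zero order_trans)
  then have "f x - 2 * norm (x - p) \<le> f p + inner (x - p) y" for x
    using convex_lip1_abs_diff_le[OF f, of x p] by (smt (verit))
  with y1 below show ?thesis using that by blast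
qed

lemma convex_lip1_max_affine_approx:
  fixes f :: "'a::euclidean_space \<Rightarrow> real"
  assumes f: "f \<in> convex_lip1"
  obtains y :: "nat \<Rightarrow> 'a" and c where "\<And>k. norm (y k) \<le> 1"
    "\<And>x. (\<lambda>n. max_affine {..n} y c x) \<longlonglongrightarrow> f x"
    "\<And>n x. \<bar>max_affine {..n} y c x\<bar> \<le> norm x + (\<bar>f 0\<bar> + \<bar>c 0\<bar>)"
proof -
  obtain D :: "'a set" where D: "countable D" "\<And>X. open X \<Longrightarrow> X \<noteq> {} \<Longrightarrow> \<exists>d\<in>D. d \<in> X"
    using countable_dense_setE by blast
  define p where "p = from_nat_into D"
  have "\<forall>k. \<exists>y. norm y \<le> 1 \<and> (\<forall>x. f (p k) + inner (x - p k) y \<le> f x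
      \<and> f x - 2 * norm (x - p k) \<le> f (p k) + inner (x - p k) y)"
    by (metis convex_lip1_supporting_affine[OF f])
  then obtain y where y: "\<And>k. norm (y k) \<le> 1" "\<And>k x. f (p k) + inner (x - p k) (y k) \<le> f x"
    "\<And>k x. f x - 2 * norm (x - p k) \<le> f (p k) + inner (x - p k) (y k)"
    by metis
  define c where "c k = inner (p k) (y k) - f (p k)" for k
  have affine: "inner x (y k) - c k = f (p k) + inner (x - p k) (y k)" for k x
    unfolding c_def by (simp add: inner_diff_left)
  have le_f: "max_affine {..n} y c x \<le> f x" for n x
    using y(2) by (simp add: max_affine_le_iff affine)
  have ge_affine: "inner x (y k) - c k \<le> max_affine {..n} y c x" if "k \<le> n" for k n x
    using that by (intro max_affine_ge) auto
  show ?thesis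
  proof
    show "norm (y k) \<le> 1" for k by (rule y(1))
    show "(\<lambda>n. max_affine {..n} y c x) \<longlonglongrightarrow> f x" for x
    proof (rule LIMSEQ_I)
      fix r :: real assume "r > 0"
      then obtain d where "d \<in> D" "d \<in> ball x (r / 3)" using D(2)[of "ball x (r / 3)"] by auto
      moreover obtain k where "p k = d"
        using from_nat_into_surj[OF D(1) \<open>d \<in> D\<close>] unfolding p_def by blast
      ultimately have "norm (x - p k) < r / 3" by (simp add: dist_norm)
      then have "\<bar>max_affine {..n} y c x - f x\<bar> < r" if "k \<le> n" for n
        using le_f[of n x] y(3)[of x k] ge_affine[OF that, of x] by (simp add: abs_if affine)
      then show "\<exists>N. \<forall>n\<ge>N. norm (max_affine {..n} y c x - f x) < r" by auto
    qed
    show "\<bar>max_affine {..n} y c x\<bar> \<le> norm x + (\<bar>f 0\<bar> + \<bar>c 0\<bar>)" for n x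
    proof -
      have "\<bar>inner x (y 0)\<bar> \<le> norm x"
        using Cauchy_Schwarz_ineq2[of x "y 0"] y(1)[of 0] by (metis mult_left_le norm_ge_zero order_trans)
      moreover have "\<bar>f x - f 0\<bar> \<le> norm x" using convex_lip1_abs_diff_le[OF f, of x 0] by simp
      ultimately show ?thesis using le_f[of n x] ge_affine[of 0 n x] by (simp add: abs_le_iff) linarith
    qed
  qed
qed

lemma corr_cost_diff_le_convex_lip1:
  fixes \<mu> \<nu> :: "'a::euclidean_space measure"
  assumes \<mu>: "\<mu> \<in> borel_prob" and \<nu>: "\<nu> \<in> borel_prob"
    and "integrable \<mu> norm" "integrable \<nu> norm" and f: "f \<in> convex_lip1" and "e > 0"
  shows "\<exists>\<rho>\<in>prob_unit_ball. corr_cost \<nu> \<rho> - corr_cost \<mu> \<rho> \<le> integral\<^sup>L \<nu> f - integral\<^sup>L \<mu> f + e"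
proof -
  obtain y :: "nat \<Rightarrow> 'a" and c where y: "\<And>k. norm (y k) \<le> 1"
    and lim: "\<And>x. (\<lambda>n. max_affine {..n} y c x) \<longlonglongrightarrow> f x"
    and bound: "\<And>n x. \<bar>max_affine {..n} y c x\<bar> \<le> norm x + (\<bar>f 0\<bar> + \<bar>c 0\<bar>)"
    using convex_lip1_max_affine_approx[OF f] by blast
  let ?gap = "\<lambda>h. integral\<^sup>L \<nu> h - integral\<^sup>L \<mu> h"
  have "(\<lambda>n. ?gap (max_affine {..n} y c)) \<longlonglongrightarrow> ?gap f"
    using borel_measurable_convex_lip1[OF f] lim bound
    by (intro tendsto_diff integral_tendsto_linear_growth[OF \<nu> assms(4), where a=1]
        integral_tendsto_linear_growth[OF \<mu> assms(3), where a=1]) auto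
  then have "eventually (\<lambda>n. ?gap (max_affine {..n} y c) < ?gap f + e) sequentially"
    using \<open>e > 0\<close> by (intro order_tendstoD(2)) auto
  then obtain n where n: "?gap (max_affine {..n} y c) < ?gap f + e"
    by (auto simp: eventually_sequentially)
  obtain \<rho> where "\<rho> \<in> prob_unit_ball" "corr_cost \<nu> \<rho> - corr_cost \<mu> \<rho> \<le> ?gap (max_affine {..n} y c)"
    using corr_cost_diff_le_max_affine[OF \<mu> \<nu> assms(3,4), of "{..n}" y c] y by blast
  with n show ?thesis by (intro bexI[of _ \<rho>]) auto
qed

section \<open>Semi-discrete optimal transport\<close>

lemma finite_bounded_seq_convergent_subseq:
  fixes s :: "nat \<Rightarrow> 'a \<Rightarrow> real"
  assumes "finite Z" "\<And>k z. z \<in> Z \<Longrightarrow> \<bar>s k z\<bar> \<le> R"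
  shows "\<exists>r l. strict_mono r \<and> (\<forall>z\<in>Z. (\<lambda>k. s (r k) z) \<longlonglongrightarrow> l z)"
  using assms
proof (induction Z arbitrary: s rule: finite_induct)
  case empty
  show ?case using strict_mono_id by blast
next
  case (insert a Z)
  obtain r l where r: "strict_mono r" "\<forall>z\<in>Z. (\<lambda>k. s (r k) z) \<longlonglongrightarrow> l z"
    using insert.IH[of s] insert.prems by auto
  have "bounded (range (\<lambda>k. s (r k) a))"
    using insert.prems[of a] by (intro boundedI[of _ R]) auto
  then obtain la r' where r': "strict_mono r'" "((\<lambda>k. s (r k) a) \<circ> r') \<longlonglongrightarrow> la"
    using bounded_imp_convergent_subsequence by blast
  show ?case
  proof (intro exI conjI ballI)
    show "strict_mono (r \<circ> r')" using r(1) r'(1) by (rule strict_mono_o)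
    fix z assume "z \<in> insert a Z"
    show "(\<lambda>k. s ((r \<circ> r') k) z) \<longlonglongrightarrow> (l(a := la)) z"
    proof (cases "z = a")
      case False
      then have "(\<lambda>k. s (r k) z) \<longlonglongrightarrow> l z" using r(2) \<open>z \<in> insert a Z\<close> by simp
      from LIMSEQ_subseq_LIMSEQ[OF this r'(1)] show ?thesis using False by (simp add: comp_def)
    qed (use r'(2) in \<open>simp add: comp_def\<close>)
  qed
qed

lemma lipschitz_tendsto_coordinatewise:
  fixes \<Phi> :: "('a \<Rightarrow> real) \<Rightarrow> real"
  assumes lip: "\<And>v w. \<bar>\<Phi> v - \<Phi> w\<bar> \<le> L * (\<Sum>z\<in>Z. \<bar>v z - w z\<bar>)"
    and lim: "\<forall>z\<in>Z. (\<lambda>k. s k z) \<longlonglongrightarrow> l z"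
  shows "(\<lambda>k. \<Phi> (s k)) \<longlonglongrightarrow> \<Phi> l"
proof -
  have "(\<lambda>k. \<Sum>z\<in>Z. \<bar>s k z - l z\<bar>) \<longlonglongrightarrow> 0"
  proof (intro tendsto_null_sum tendsto_rabs_zero)
    fix z assume "z \<in> Z"
    then show "(\<lambda>k. s k z - l z) \<longlonglongrightarrow> 0" using lim by (simp add: Lim_null[symmetric])
  qed
  then have lim0: "(\<lambda>k. L * (\<Sum>z\<in>Z. \<bar>s k z - l z\<bar>)) \<longlonglongrightarrow> 0"
    by (rule tendsto_mult_right_zero)
  have "\<forall>k. norm (\<Phi> (s k) - \<Phi> l) \<le> L * (\<Sum>z\<in>Z. \<bar>s k z - l z\<bar>)"
    using lip by simp
  from Lim_null_comparison[OF always_eventually[OF this] lim0]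
  show ?thesis by (simp add: Lim_null[symmetric])
qed

lemma lipschitz_attains_min_on_box:
  fixes \<Phi> :: "('a \<Rightarrow> real) \<Rightarrow> real"
  assumes Z: "finite Z" and "a \<le> b" and "0 \<le> L"
    and lip: "\<And>v w. \<bar>\<Phi> v - \<Phi> w\<bar> \<le> L * (\<Sum>z\<in>Z. \<bar>v z - w z\<bar>)"
  defines "B \<equiv> {v. \<forall>z\<in>Z. a \<le> v z \<and> v z \<le> b}"
  shows "\<exists>v\<in>B. \<forall>w\<in>B. \<Phi> v \<le> \<Phi> w"
proof -
  define m where "m = Inf (\<Phi> ` B)"
  have "(\<lambda>_. a) \<in> B" using \<open>a \<le> b\<close> by (simp add: B_def)
  have "\<Phi> (\<lambda>_. a) - L * (card Z * (b - a)) \<le> \<Phi> w" if "w \<in> B" for w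
  proof -
    have "(\<Sum>z\<in>Z. \<bar>a - w z\<bar>) \<le> (\<Sum>z\<in>Z. b - a)"
      using that by (intro sum_mono) (auto simp: B_def)
    then have "L * (\<Sum>z\<in>Z. \<bar>a - w z\<bar>) \<le> L * (card Z * (b - a))"
      using \<open>0 \<le> L\<close> by (simp add: mult_left_mono)
    then show ?thesis using lip[of "\<lambda>_. a" w] by linarith
  qed
  then have m_le: "m \<le> \<Phi> w" if "w \<in> B" for w
    unfolding m_def using that by (intro cInf_lower bdd_belowI2) auto
  have "\<exists>v\<in>B. \<Phi> v < m + 1 / Suc k" for k
  proof -
    have "Inf (\<Phi> ` B) < m + 1 / Suc k" unfolding m_def by simp
    from cInf_lessD[OF _ this] show ?thesis using \<open>(\<lambda>_. a) \<in> B\<close> by blast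
  qed
  then obtain s where s: "\<And>k. s k \<in> B" "\<And>k. \<Phi> (s k) < m + 1 / Suc k" by metis
  have "\<bar>s k z\<bar> \<le> \<bar>a\<bar> + \<bar>b\<bar>" if "z \<in> Z" for k z using s(1)[of k] that by (auto simp: B_def)
  then obtain r l where r: "strict_mono r" "\<forall>z\<in>Z. (\<lambda>k. s (r k) z) \<longlonglongrightarrow> l z"
    using finite_bounded_seq_convergent_subseq[OF Z] by blast
  have "a \<le> l z \<and> l z \<le> b" if "z \<in> Z" for z
  proof -
    have lim: "(\<lambda>k. s (r k) z) \<longlonglongrightarrow> l z" using r(2) that by blast
    have "\<forall>k. a \<le> s (r k) z \<and> s (r k) z \<le> b" using s(1) that by (auto simp: B_def)
    then show ?thesis using LIMSEQ_le_const[OF lim] LIMSEQ_le_const2[OF lim] by blast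
  qed
  then have "l \<in> B" by (simp add: B_def)
  have "(\<lambda>k. m + 1 / Suc k) \<longlonglongrightarrow> m"
    using tendsto_add[OF tendsto_const LIMSEQ_Suc[OF lim_inverse_n'], of m] by simp
  moreover have "\<Phi> (s (r k)) \<le> m + 1 / Suc k" for k
  proof -
    have "1 / real (Suc (r k)) \<le> 1 / real (Suc k)"
      using seq_suble[OF r(1), of k] by (simp add: frac_le)
    then show ?thesis using s(2)[of "r k"] by linarith
  qed
  ultimately have "\<Phi> l \<le> m"
    using lipschitz_tendsto_coordinatewise[OF lip r(2)]
    by (intro LIMSEQ_le[of "\<lambda>k. \<Phi> (s (r k))" _ "\<lambda>k. m + 1 / Suc k"]) auto
  then show ?thesis using \<open>l \<in> B\<close> m_le by force
qed

locale semidiscrete_transport =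
  fixes \<nu> :: "'a::euclidean_space measure" and Z :: "'a set" and b :: "'a \<Rightarrow> real"
  assumes \<nu>: "\<nu> \<in> borel_prob" and moment: "integrable \<nu> norm"
    and Z: "finite Z" "Z \<noteq> {}" and b_pos: "\<And>z. z \<in> Z \<Longrightarrow> 0 < b z" and b_sum: "(\<Sum>z\<in>Z. b z) = 1"
begin

text \<open>The dual functional of optimal transport from \<open>\<nu>\<close> to the measure with masses \<open>b z\<close> at the
  points \<open>z \<in> Z\<close>; at a minimizer \<open>v\<close> the Laguerre cells of \<open>max_affine Z id v\<close> carry exactly
  these masses.\<close>

definition dual_objective :: "('a \<Rightarrow> real) \<Rightarrow> real" where
  "dual_objective v = integral\<^sup>L \<nu> (max_affine Z id v) + (\<Sum>z\<in>Z. b z * v z)"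

definition radius :: real where "radius = (\<Sum>z\<in>Z. norm z)"

lemma prob_space: "prob_space \<nu>"
  using borel_probD(1)[OF \<nu>] .

lemma norm_le_radius: "z \<in> Z \<Longrightarrow> norm z \<le> radius"
  unfolding radius_def using Z(1) by (intro member_le_sum) auto

lemma integrable_max_affine: "integrable \<nu> (max_affine Z id v)"
  using abs_max_affine_le[OF Z, where y=id and r=radius and c=v] norm_le_radius
  by (intro integrable_linear_growth[OF \<nu> moment borel_measurable_max_affine[OF Z(1)],
        where a=radius and b="\<Sum>z\<in>Z. \<bar>v z\<bar>"]) auto

lemma dual_objective_lipschitz:
  "\<bar>dual_objective v - dual_objective w\<bar> \<le> 2 * (\<Sum>z\<in>Z. \<bar>v z - w z\<bar>)"
proof -
  interpret prob_space \<nu> by (rule prob_space)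
  have "\<bar>integral\<^sup>L \<nu> (max_affine Z id v) - integral\<^sup>L \<nu> (max_affine Z id w)\<bar>
      = \<bar>\<integral>x. max_affine Z id v x - max_affine Z id w x \<partial>\<nu>\<bar>"
    using integrable_max_affine by simp
  also have "\<dots> \<le> (\<integral>x. (\<Sum>z\<in>Z. \<bar>v z - w z\<bar>) \<partial>\<nu>)"
    using integrable_max_affine abs_max_affine_diff_le[OF Z] by (intro integral_abs_bound_integral) auto
  finally have "\<bar>integral\<^sup>L \<nu> (max_affine Z id v) - integral\<^sup>L \<nu> (max_affine Z id w)\<bar> \<le> (\<Sum>z\<in>Z. \<bar>v z - w z\<bar>)"
    by (simp add: prob_space)
  moreover have "\<bar>(\<Sum>z\<in>Z. b z * v z) - (\<Sum>z\<in>Z. b z * w z)\<bar> \<le> (\<Sum>z\<in>Z. \<bar>v z - w z\<bar>)"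
  proof -
    have "b z \<le> 1" if "z \<in> Z" for z
      using member_le_sum[of z Z b] that b_pos b_sum Z(1) by (simp add: less_imp_le)
    then have "\<bar>b z * (v z - w z)\<bar> \<le> \<bar>v z - w z\<bar>" if "z \<in> Z" for z
      using b_pos[OF that] that by (simp add: abs_mult mult_left_le_one_le)
    then have "(\<Sum>z\<in>Z. \<bar>b z * (v z - w z)\<bar>) \<le> (\<Sum>z\<in>Z. \<bar>v z - w z\<bar>)" by (rule sum_mono)
    moreover have "\<bar>\<Sum>z\<in>Z. b z * (v z - w z)\<bar> \<le> (\<Sum>z\<in>Z. \<bar>b z * (v z - w z)\<bar>)" by (rule sum_abs)
    ultimately show ?thesis by (simp add: sum_subtractf right_diff_distrib)
  qed
  ultimately show ?thesis unfolding dual_objective_def by linarith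
qed

lemma dual_objective_add_const: "dual_objective (\<lambda>z. v z + t) = dual_objective v"
proof -
  interpret prob_space \<nu> by (rule prob_space)
  have "max_affine Z id (\<lambda>z. v z + t) = (\<lambda>x. max_affine Z id v x - t)"
    using max_affine_add_const[OF Z] by blast
  then have "integral\<^sup>L \<nu> (max_affine Z id (\<lambda>z. v z + t)) = integral\<^sup>L \<nu> (max_affine Z id v) - t"
    using integrable_max_affine by (simp add: prob_space)
  moreover have "(\<Sum>z\<in>Z. b z * (v z + t)) = (\<Sum>z\<in>Z. b z * v z) + t"
    using b_sum by (simp add: distrib_left sum.distrib flip: sum_distrib_right)
  ultimately show ?thesis unfolding dual_objective_def by simp
qed

definition coercivity_bound :: real where
  "coercivity_bound = (2 * radius * integral\<^sup>L \<nu> norm + 1) / Min (b ` Z)"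

lemma coercivity_bound_nonneg: "0 \<le> coercivity_bound"
proof -
  have "0 < Min (b ` Z)" using Z b_pos by auto
  moreover have "0 \<le> radius" unfolding radius_def by (simp add: sum_nonneg)
  moreover have "0 \<le> integral\<^sup>L \<nu> norm" by simp
  ultimately show ?thesis unfolding coercivity_bound_def by simp
qed

lemma dual_objective_coercive:
  assumes nonneg: "\<And>z. z \<in> Z \<Longrightarrow> 0 \<le> v z" and "z0 \<in> Z" "v z0 = 0" and "z1 \<in> Z" "coercivity_bound < v z1"
  shows "dual_objective (\<lambda>_. 0) < dual_objective v"
proof -
  interpret prob_space \<nu> by (rule prob_space)
  have bmin: "0 < Min (b ` Z)" "Min (b ` Z) \<le> b z1"
    using Z b_pos \<open>z1 \<in> Z\<close> by auto
  have "max_affine Z id (\<lambda>_. 0) x \<le> radius * norm x" for x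
    using abs_max_affine_le[OF Z, where y=id and r=radius and c="\<lambda>_. 0" and x=x] norm_le_radius by simp
  then have "integral\<^sup>L \<nu> (max_affine Z id (\<lambda>_. 0)) \<le> (\<integral>x. radius * norm x \<partial>\<nu>)"
    using integrable_max_affine moment by (intro integral_mono) auto
  then have "dual_objective (\<lambda>_. 0) \<le> radius * integral\<^sup>L \<nu> norm"
    unfolding dual_objective_def by simp
  moreover have "- radius * norm x \<le> max_affine Z id v x" for x
  proof -
    have "\<bar>inner x z0\<bar> \<le> radius * norm x"
      using Cauchy_Schwarz_ineq2[of x z0] norm_le_radius[OF \<open>z0 \<in> Z\<close>]
      by (metis mult.commute mult_right_mono norm_ge_zero order_trans)
    then show ?thesis using max_affine_ge[OF Z(1) \<open>z0 \<in> Z\<close>, of x id v] \<open>v z0 = 0\<close> by simp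
  qed
  then have "(\<integral>x. - radius * norm x \<partial>\<nu>) \<le> integral\<^sup>L \<nu> (max_affine Z id v)"
    using integrable_max_affine moment by (intro integral_mono) auto
  moreover have "0 \<le> b z * v z" if "z \<in> Z" for z
    using b_pos[OF that] nonneg[OF that] by simp
  then have "b z1 * v z1 \<le> (\<Sum>z\<in>Z. b z * v z)"
    using Z(1) \<open>z1 \<in> Z\<close> by (intro member_le_sum) auto
  moreover have "2 * radius * integral\<^sup>L \<nu> norm + 1 \<le> b z1 * v z1"
  proof -
    have "2 * radius * integral\<^sup>L \<nu> norm + 1 = Min (b ` Z) * coercivity_bound"
      unfolding coercivity_bound_def using bmin(1) by simp
    also have "\<dots> \<le> b z1 * v z1"
      using bmin \<open>coercivity_bound < v z1\<close> coercivity_bound_nonneg by (intro mult_mono) auto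
    finally show ?thesis .
  qed
  ultimately show ?thesis unfolding dual_objective_def by simp
qed

lemma dual_objective_has_minimizer: "\<exists>v. \<forall>w. dual_objective v \<le> dual_objective w"
proof -
  obtain v where "\<forall>z\<in>Z. 0 \<le> v z \<and> v z \<le> coercivity_bound"
    and min: "\<And>w. \<forall>z\<in>Z. 0 \<le> w z \<and> w z \<le> coercivity_bound \<Longrightarrow> dual_objective v \<le> dual_objective w"
    using lipschitz_attains_min_on_box[OF Z(1) coercivity_bound_nonneg _ dual_objective_lipschitz] by force
  have "dual_objective v \<le> dual_objective w" for w
  proof -
    define w' where "w' z = w z + - Min (w ` Z)" for z
    have "dual_objective w' = dual_objective w" unfolding w'_def by (rule dual_objective_add_const)
    moreover have nonneg: "0 \<le> w' z" if "z \<in> Z" for z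
      using Min_le[of "w ` Z" "w z"] that Z(1) by (simp add: w'_def)
    moreover have "Min (w ` Z) \<in> w ` Z" using Z by simp
    then obtain z0 where "z0 \<in> Z" "w' z0 = 0" by (auto simp: w'_def)
    ultimately show ?thesis
      using min[of w'] min[of "\<lambda>_. 0"] dual_objective_coercive[of w', OF nonneg \<open>z0 \<in> Z\<close> \<open>w' z0 = 0\<close>]
        coercivity_bound_nonneg by (smt (verit) not_le)
  qed
  then show ?thesis by blast
qed

definition laguerre_cell :: "('a \<Rightarrow> real) \<Rightarrow> 'a \<Rightarrow> real \<Rightarrow> 'a set" where
  "laguerre_cell v z s = {x. max_affine Z id v x \<le> inner x z - v z + s}"

lemma laguerre_cell_sets: "laguerre_cell v z s \<in> sets \<nu>"
proof -
  have "{x \<in> space borel. max_affine Z id v x \<le> inner x z - v z + s} \<in> sets borel"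
    using borel_measurable_max_affine[OF Z(1)] by measurable
  then show ?thesis using borel_probD(2)[OF \<nu>] by (simp add: laguerre_cell_def)
qed

lemma mass_le_measure_laguerre_cell:
  assumes min: "\<And>w. dual_objective v \<le> dual_objective w" and z: "z \<in> Z" and "0 < s"
  shows "b z \<le> measure \<nu> (laguerre_cell v z s)"
proof -
  interpret prob_space \<nu> by (rule prob_space)
  define w where "w = v(z := v z - s)"
  have gain: "max_affine Z id w x - max_affine Z id v x \<le> s * indicator (laguerre_cell v z s) x" for x
  proof -
    obtain z' where z': "z' \<in> Z" "max_affine Z id w x = inner x z' - w z'"
      using max_affine_attained[OF Z, of id w x] by auto
    have "inner x z' - v z' \<le> max_affine Z id v x" using max_affine_ge[OF Z(1) z'(1), of x id v] by simp
    moreover have "inner x z - v z \<le> max_affine Z id v x" using max_affine_ge[OF Z(1) z, of x id v] by simp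
    ultimately show ?thesis
      using z' \<open>0 < s\<close> by (auto simp: w_def laguerre_cell_def indicator_def split: if_splits)
  qed
  have "(\<Sum>z'\<in>Z. b z' * w z') = (\<Sum>z'\<in>Z. b z' * v z') - s * b z"
    using Z(1) z by (simp add: w_def sum.remove algebra_simps)
  then have "s * b z \<le> integral\<^sup>L \<nu> (max_affine Z id w) - integral\<^sup>L \<nu> (max_affine Z id v)"
    using min[of w] unfolding dual_objective_def by simp
  also have "\<dots> = (\<integral>x. max_affine Z id w x - max_affine Z id v x \<partial>\<nu>)"
    using integrable_max_affine by simp
  also have "\<dots> \<le> (\<integral>x. s * indicator (laguerre_cell v z s) x \<partial>\<nu>)"
  proof (rule integral_mono[OF _ _ gain])
    show "integrable \<nu> (\<lambda>x. max_affine Z id w x - max_affine Z id v x)"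
      using integrable_max_affine by simp
    show "integrable \<nu> (\<lambda>x. s * indicator (laguerre_cell v z s) x)"
      using laguerre_cell_sets
      by (intro integrable_mult_right integrable_real_indicator) (auto simp: emeasure_eq_measure)
  qed
  also have "\<dots> = s * measure \<nu> (laguerre_cell v z s)"
    using laguerre_cell_sets by simp
  finally show ?thesis using \<open>0 < s\<close> by simp
qed

lemma mass_le_measure_laguerre_cell_0:
  assumes min: "\<And>w. dual_objective v \<le> dual_objective w" and z: "z \<in> Z"
  shows "b z \<le> measure \<nu> (laguerre_cell v z 0)"
proof -
  interpret prob_space \<nu> by (rule prob_space)
  define C where "C k = laguerre_cell v z (1 / Suc k)" for k
  have "range C \<subseteq> sets \<nu>" using laguerre_cell_sets by (auto simp: C_def)
  moreover have "decseq C"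
  proof (rule decseq_SucI)
    fix k
    have "1 / real (Suc (Suc k)) \<le> 1 / real (Suc k)" by (simp add: frac_le)
    then show "C (Suc k) \<le> C k" unfolding C_def laguerre_cell_def by auto
  qed
  moreover have "(\<Inter>k. C k) = laguerre_cell v z 0"
  proof (intro equalityI subsetI)
    fix x assume "x \<in> (\<Inter>k. C k)"
    then have le: "max_affine Z id v x \<le> inner x z - v z + 1 / Suc k" for k
      by (auto simp: C_def laguerre_cell_def)
    have "max_affine Z id v x \<le> inner x z - v z"
    proof (rule field_le_epsilon)
      fix e :: real assume "0 < e"
      then obtain k where "inverse (real (Suc k)) < e" using reals_Archimedean by blast
      then show "max_affine Z id v x \<le> inner x z - v z + e"
        using le[of k] by (simp add: inverse_eq_divide)
    qed
    then show "x \<in> laguerre_cell v z 0" by (simp add: laguerre_cell_def)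
  next
    fix x assume "x \<in> laguerre_cell v z 0"
    then show "x \<in> (\<Inter>k. C k)" by (auto simp: C_def laguerre_cell_def intro: order_trans)
  qed
  ultimately have "(\<lambda>k. measure \<nu> (C k)) \<longlonglongrightarrow> measure \<nu> (laguerre_cell v z 0)"
    using finite_Lim_measure_decseq[of C] by simp
  then show ?thesis
    using mass_le_measure_laguerre_cell[OF min z] by (intro LIMSEQ_le_const) (auto simp: C_def)
qed

definition ties :: "('a \<Rightarrow> real) \<Rightarrow> 'a set" where
  "ties v = (\<Union>z1\<in>Z. \<Union>z2\<in>Z - {z1}. {x. inner (z1 - z2) x = v z1 - v z2})"

lemma ties_null_sets:
  assumes "absolutely_continuous lborel \<nu>"
  shows "ties v \<in> null_sets \<nu>"
  unfolding ties_def using Z(1)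
  by (intro null_sets_UN' null_sets_hyperplane[OF assms]) (auto intro: countable_finite)

lemma laguerre_cell_diff_ties_subset:
  assumes A: "\<And>x. A x \<in> Z" "\<And>x. inner x (A x) - v (A x) = max_affine Z id v x" and "z \<in> Z"
  shows "laguerre_cell v z 0 - ties v \<subseteq> A -` {z}"
proof
  fix x assume x: "x \<in> laguerre_cell v z 0 - ties v"
  then have "max_affine Z id v x \<le> inner x z - v z" by (simp add: laguerre_cell_def)
  moreover have "inner (A x - z) x = inner x (A x) - inner x z"
    by (metis inner_commute inner_diff_right)
  ultimately have tie: "inner (A x - z) x = v (A x) - v z"
    using A(2)[of x] max_affine_ge[OF Z(1) \<open>z \<in> Z\<close>, of x id v] by simp
  show "x \<in> A -` {z}"
  proof (rule ccontr)
    assume "x \<notin> A -` {z}"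
    then have "z \<in> Z - {A x}" using \<open>z \<in> Z\<close> by simp
    with tie A(1)[of x] have "x \<in> ties v"
      unfolding ties_def by (intro UN_I[of "A x"] UN_I[of z]) auto
    with x show False by simp
  qed
qed

lemma exists_transport_map:
  assumes ac: "absolutely_continuous lborel \<nu>"
  obtains A v where "A \<in> borel_measurable borel" "\<And>x. A x \<in> Z"
    "\<And>x. inner x (A x) - v (A x) = max_affine Z id v x"
    "\<And>z. z \<in> Z \<Longrightarrow> measure \<nu> (A -` {z}) = b z"
proof -
  interpret prob_space \<nu> by (rule prob_space)
  obtain v where min: "\<And>w. dual_objective v \<le> dual_objective w"
    using dual_objective_has_minimizer by blast
  obtain A where A: "\<And>x. A x \<in> Z" "\<And>x. inner x (A x) - v (A x) = max_affine Z id v x"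
    and "(\<lambda>x. id (A x)) \<in> borel_measurable borel"
    using max_affine_argmax_selector[OF Z, of id v] by auto
  then have A_meas: "A \<in> borel_measurable borel" by simp
  have A_sets: "A -` {z} \<in> sets \<nu>" for z
    using measurable_sets_borel[OF A_meas] borel_probD(2)[OF \<nu>] by simp
  have ge: "b z \<le> measure \<nu> (A -` {z})" if "z \<in> Z" for z
  proof -
    have "b z \<le> measure \<nu> (laguerre_cell v z 0)" by (rule mass_le_measure_laguerre_cell_0[OF min that])
    also have "\<dots> = measure \<nu> (laguerre_cell v z 0 - ties v)"
      using laguerre_cell_sets ties_null_sets[OF ac] by (simp add: measure_Diff_null_set)
    also have "\<dots> \<le> measure \<nu> (A -` {z})"
      using laguerre_cell_diff_ties_subset[OF A that] A_sets by (intro finite_measure_mono) auto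
    finally show ?thesis .
  qed
  have "(\<Sum>z\<in>Z. measure \<nu> (A -` {z})) = measure \<nu> (\<Union>z\<in>Z. A -` {z})"
    using A_sets Z(1)
    by (intro measure_finite_Union[symmetric]) (auto simp: disjoint_family_on_def emeasure_eq_measure)
  also have "(\<Union>z\<in>Z. A -` {z}) = space \<nu>" using A(1) borel_probD(3)[OF \<nu>] by auto
  finally have "(\<Sum>z\<in>Z. measure \<nu> (A -` {z}) - b z) = 0"
    using b_sum prob_space by (simp add: sum_subtractf)
  then have "\<forall>z\<in>Z. measure \<nu> (A -` {z}) - b z = 0"
    using sum_nonneg_eq_0_iff[OF Z(1), of "\<lambda>z. measure \<nu> (A -` {z}) - b z"] ge by simp
  then have "\<And>z. z \<in> Z \<Longrightarrow> measure \<nu> (A -` {z}) = b z" by simp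
  from that[OF A_meas A(1) A(2) this] show ?thesis .
qed

end

section \<open>Quantization of measures in the unit ball\<close>

lemma finite_quantizer:
  assumes "0 < \<delta>"
  obtains T :: "'a::euclidean_space \<Rightarrow> 'a" where "T \<in> borel_measurable borel" "finite (range T)"
    "\<And>y. norm (T y) \<le> 1" "\<And>y. norm y \<le> 1 \<Longrightarrow> norm (T y - y) < \<delta>"
proof -
  obtain C where C: "C \<subseteq> cball (0::'a) 1" "finite C" "cball 0 1 \<subseteq> (\<Union>c\<in>C. ball c \<delta>)"
  proof (rule compactE_image[of "cball (0::'a) 1" "cball 0 1" "\<lambda>c. ball c \<delta>"])
    show "cball 0 1 \<subseteq> (\<Union>c\<in>cball 0 1. ball c \<delta>)" using assms by force
  qed auto
  obtain cs where cs: "set cs = C" using finite_list[OF C(2)] by blast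
  define idx where "idx y = (LEAST i. i < length cs \<and> dist (cs ! i) y < \<delta> \<or> i = length cs)" for y
  \<comment> \<open>points not within \<open>\<delta>\<close> of any centre are sent to \<open>0\<close>\<close>
  define zs where "zs = cs @ [0]"
  define T where "T y = zs ! idx y" for y
  have idx_le: "idx y \<le> length cs" for y unfolding idx_def by (rule Least_le) simp
  have T_in: "T y \<in> insert 0 C" for y
  proof (cases "idx y < length cs")
    case True
    then show ?thesis using cs nth_mem[OF True] by (simp add: T_def zs_def nth_append)
  next
    case False
    then show ?thesis using idx_le[of y] by (simp add: T_def zs_def)
  qed
  have "range T \<subseteq> insert 0 C" using T_in by blast
  then have "finite (range T)" using C(2) by (rule finite_subset[OF _ finite_insert[THEN iffD2]])
  moreover have "idx \<in> measurable borel (count_space UNIV)" unfolding idx_def[abs_def] by measurable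
  then have "T \<in> borel_measurable borel" unfolding T_def[abs_def] by (rule measurable_compose) simp
  moreover have "norm (T y) \<le> 1" for y using T_in[of y] C(1) by (auto simp: subset_iff)
  moreover have "norm (T y - y) < \<delta>" if "norm y \<le> 1" for y
  proof -
    have "y \<in> cball 0 1" using that by simp
    from subsetD[OF C(3) this] obtain c where "c \<in> C" "dist c y < \<delta>" by auto
    moreover obtain i where "i < length cs" "cs ! i = c"
      using \<open>c \<in> C\<close> cs in_set_conv_nth[of c cs] by auto
    ultimately have i: "i < length cs" "dist (cs ! i) y < \<delta>" by simp_all
    let ?P = "\<lambda>i. i < length cs \<and> dist (cs ! i) y < \<delta> \<or> i = length cs"
    have "?P (idx y)" unfolding idx_def by (rule LeastI[of ?P i]) (use i in simp)
    moreover have "idx y \<le> i" unfolding idx_def by (rule Least_le) (use i in simp)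
    ultimately have "dist (cs ! idx y) y < \<delta>" "idx y < length cs" using i(1) by auto
    then show ?thesis by (simp add: T_def zs_def nth_append dist_norm)
  qed
  ultimately show ?thesis using that by blast
qed

lemma finite_range_masses:
  fixes \<rho> :: "'a::euclidean_space measure" and T :: "'a \<Rightarrow> 'a"
  assumes \<rho>: "\<rho> \<in> borel_prob" and T: "T \<in> borel_measurable borel" "finite (range T)"
  defines "Z \<equiv> {z \<in> range T. 0 < measure \<rho> (T -` {z})}"
  shows "finite Z" and "(\<Sum>z\<in>Z. measure \<rho> (T -` {z})) = 1" and "AE y in \<rho>. T y \<in> Z"
proof -
  interpret prob_space \<rho> using borel_probD(1)[OF \<rho>] .
  have sets: "T -` {z} \<in> sets \<rho>" for z
    using measurable_sets_borel[OF T(1)] borel_probD(2)[OF \<rho>] by simp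
  show "finite Z" using T(2) by (simp add: Z_def)
  have "(\<Sum>z\<in>range T. measure \<rho> (T -` {z})) = measure \<rho> (\<Union>z\<in>range T. T -` {z})"
    using sets T(2)
    by (intro measure_finite_Union[symmetric]) (auto simp: disjoint_family_on_def emeasure_eq_measure)
  also have "(\<Union>z\<in>range T. T -` {z}) = space \<rho>" using borel_probD(3)[OF \<rho>] by auto
  also have "(\<Sum>z\<in>range T. measure \<rho> (T -` {z})) = (\<Sum>z\<in>Z. measure \<rho> (T -` {z}))"
    using T(2) by (intro sum.mono_neutral_right) (auto simp: Z_def less_le)
  finally show "(\<Sum>z\<in>Z. measure \<rho> (T -` {z})) = 1" by (simp add: prob_space)
  have "T -` {z} \<in> null_sets \<rho>" if "z \<in> range T - Z" for z
  proof -
    have "measure \<rho> (T -` {z}) = 0" using that measure_nonneg[of \<rho> "T -` {z}"] by (auto simp: Z_def)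
    then show ?thesis using sets[of z] by (simp add: null_sets_def emeasure_eq_measure)
  qed
  then have "(\<Union>z\<in>range T - Z. T -` {z}) \<in> null_sets \<rho>"
    using T(2) by (intro null_sets_UN') (auto intro: countable_finite)
  then show "AE y in \<rho>. T y \<in> Z" by (rule AE_I') auto
qed

lemma corr_cost_le_quantized:
  fixes \<alpha> \<rho> :: "'a::euclidean_space measure" and T :: "'a \<Rightarrow> 'a"
  assumes \<alpha>: "\<alpha> \<in> borel_prob" and \<rho>: "\<rho> \<in> prob_unit_ball" and moment: "integrable \<alpha> norm"
    and T: "T \<in> borel_measurable borel" "finite Z" "AE y in \<rho>. T y \<in> Z"
    and close: "\<And>y. norm y \<le> 1 \<Longrightarrow> norm (T y - y) \<le> \<delta>"
    and f: "integrable \<alpha> f" "f \<in> borel_measurable borel"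
    and fenchel_young: "\<And>x z. z \<in> Z \<Longrightarrow> inner x z \<le> f x + v z"
  shows "corr_cost \<alpha> \<rho> \<le> integral\<^sup>L \<alpha> f + \<delta> * integral\<^sup>L \<alpha> norm + (\<Sum>z\<in>Z. v z * measure \<rho> (T -` {z}))"
proof -
  define \<psi> where "\<psi> y = (if T y \<in> Z then v (T y) else 0)" for y
  have \<rho>': "\<rho> \<in> borel_prob" by (rule prob_unit_ball_borel_prob[OF \<rho>])
  have "corr_cost \<alpha> \<rho> \<le> (\<integral>x. f x + \<delta> * norm x \<partial>\<alpha>) + integral\<^sup>L \<rho> \<psi>"
  proof (rule corr_cost_le_integral_add[OF \<alpha> \<rho> moment])
    show "integrable \<alpha> (\<lambda>x. f x + \<delta> * norm x)" using f moment by simp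
    show "(\<lambda>x. f x + \<delta> * norm x) \<in> borel_measurable borel" using f(2) by measurable
    show "integrable \<rho> \<psi>" unfolding \<psi>_def by (rule integral_finite_valued_comp(1)[OF \<rho>' T(1,2)])
    show "\<psi> \<in> borel_measurable borel"
      unfolding \<psi>_def[abs_def]
      using measurable_compose[OF T(1) borel_measurable_finite_support[OF T(2), of v]] by simp
    have "T -` Z \<in> sets borel"
      using T(2) by (intro measurable_sets_borel[OF T(1)] borel_closed finite_imp_closed)
    moreover have "{y. norm y \<le> 1 \<and> T y \<in> Z} = cball 0 1 \<inter> T -` Z" by auto
    ultimately show "{y. norm y \<le> 1 \<and> T y \<in> Z} \<in> sets borel" by simp
    show "AE y in \<rho>. y \<in> {y. norm y \<le> 1 \<and> T y \<in> Z}"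
      using AE_norm_le_1_prob_unit_ball[OF \<rho>] T(3) by eventually_elim simp
    fix x y assume y: "y \<in> {y. norm y \<le> 1 \<and> T y \<in> Z}"
    have "inner x (y - T y) \<le> norm x * norm (y - T y)"
      using Cauchy_Schwarz_ineq2[of x "y - T y"] by (rule abs_le_D1)
    also have "\<dots> \<le> norm x * \<delta>"
      using close[of y] y by (intro mult_left_mono) (auto simp: norm_minus_commute)
    finally have "inner x (y - T y) \<le> \<delta> * norm x" by (simp add: mult.commute)
    then show "inner x y \<le> f x + \<delta> * norm x + \<psi> y"
      using fenchel_young[of "T y" x] y by (simp add: \<psi>_def inner_diff_right)
  qed
  also have "\<dots> = integral\<^sup>L \<alpha> f + \<delta> * integral\<^sup>L \<alpha> norm + (\<Sum>z\<in>Z. v z * measure \<rho> (T -` {z}))"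
    using f moment integral_finite_valued_comp(2)[OF \<rho>' T(1,2)] by (simp add: \<psi>_def[abs_def])
  finally show ?thesis .
qed

lemma quantized_le_corr_cost:
  fixes \<alpha> \<rho> :: "'a::euclidean_space measure" and A T :: "'a \<Rightarrow> 'a"
  assumes \<rho>: "\<rho> \<in> prob_unit_ball" and moment: "integrable \<alpha> norm"
    and \<pi>: "\<pi> \<in> couplings \<alpha> \<rho>" "AE p in \<pi>. A (fst p) = T (snd p)"
    and A: "A \<in> borel_measurable borel" "integrable \<alpha> (\<lambda>x. inner x (A x))"
    and close: "\<And>y. norm y \<le> 1 \<Longrightarrow> norm (T y - y) \<le> \<delta>"
  shows "(\<integral>x. inner x (A x) \<partial>\<alpha>) - \<delta> * integral\<^sup>L \<alpha> norm \<le> corr_cost \<alpha> \<rho>"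
proof -
  have "(\<integral>x. inner x (A x) - \<delta> * norm x \<partial>\<alpha>) \<le> corr_cost \<alpha> \<rho>"
  proof (rule integral_le_corr_cost[OF \<rho> moment \<pi>(1)])
    show "integrable \<alpha> (\<lambda>x. inner x (A x) - \<delta> * norm x)" using A(2) moment by simp
    show "(\<lambda>x. inner x (A x) - \<delta> * norm x) \<in> borel_measurable borel" using A(1) by measurable
    have "AE p in \<pi>. norm (snd p) \<le> 1"
      by (rule AE_coupling_snd[OF \<pi>(1) AE_norm_le_1_prob_unit_ball[OF \<rho>]]) measurable
    then show "AE p in \<pi>. inner (fst p) (A (fst p)) - \<delta> * norm (fst p) \<le> inner (fst p) (snd p)"
      using \<pi>(2)
    proof eventually_elim
      case (elim p)
      have "inner (fst p) (T (snd p) - snd p) \<le> \<delta> * norm (fst p)"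
        using Cauchy_Schwarz_ineq2[of "fst p" "T (snd p) - snd p"] close[of "snd p"] elim(1)
        by (smt (verit) mult.commute mult_left_mono norm_ge_zero)
      then show ?case using elim(2) by (simp add: inner_diff_right)
    qed
  qed
  then show ?thesis using A(2) moment by simp
qed

lemma semidiscrete_transport_to_quantized:
  fixes \<nu> \<rho> :: "'a::euclidean_space measure" and T :: "'a \<Rightarrow> 'a"
  assumes \<nu>: "\<nu> \<in> borel_prob" and moment: "integrable \<nu> norm" and ac: "absolutely_continuous lborel \<nu>"
    and \<rho>: "\<rho> \<in> borel_prob" and T: "T \<in> borel_measurable borel" "finite (range T)"
  obtains Z A v where "finite Z" "Z \<noteq> {}" "Z \<subseteq> range T" "AE y in \<rho>. T y \<in> Z"
    "A \<in> borel_measurable borel" "\<And>x. A x \<in> Z" "\<And>x. inner x (A x) - v (A x) = max_affine Z id v x"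
    "\<And>z. z \<in> Z \<Longrightarrow> measure \<nu> (A -` {z}) = measure \<rho> (T -` {z})"
    "\<And>z. z \<in> Z \<Longrightarrow> 0 < measure \<rho> (T -` {z})"
proof -
  define Z where "Z = {z \<in> range T. 0 < measure \<rho> (T -` {z})}"
  have ZT: "finite Z" "(\<Sum>z\<in>Z. measure \<rho> (T -` {z})) = 1" "AE y in \<rho>. T y \<in> Z"
    using finite_range_masses[OF \<rho> T] unfolding Z_def by simp_all
  have "Z \<noteq> {}" using ZT(2) by auto
  have "Z \<subseteq> range T" and pos: "\<And>z. z \<in> Z \<Longrightarrow> 0 < measure \<rho> (T -` {z})"
    unfolding Z_def by blast+
  have "semidiscrete_transport \<nu> Z (\<lambda>z. measure \<rho> (T -` {z}))"
    by (rule semidiscrete_transport.intro[OF \<nu> moment ZT(1) \<open>Z \<noteq> {}\<close> pos ZT(2)])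
  obtain A v where A: "A \<in> borel_measurable borel" "\<And>x. A x \<in> Z"
    "\<And>x. inner x (A x) - v (A x) = max_affine Z id v x"
    "\<And>z. z \<in> Z \<Longrightarrow> measure \<nu> (A -` {z}) = measure \<rho> (T -` {z})"
    by (rule semidiscrete_transport.exists_transport_map[OF \<open>semidiscrete_transport \<nu> Z _\<close> ac])
      (rule that; assumption)
  show ?thesis
    by (rule that[OF ZT(1) \<open>Z \<noteq> {}\<close> \<open>Z \<subseteq> range T\<close> ZT(3) A(1) A(2) A(3) A(4) pos])
qed

lemma integral_diff_le_corr_cost_diff:
  fixes \<mu> \<nu> \<rho> :: "'a::euclidean_space measure"
  assumes \<mu>: "\<mu> \<in> borel_prob" and \<nu>: "\<nu> \<in> borel_prob"
    and moment: "integrable \<mu> norm" "integrable \<nu> norm" and ac: "absolutely_continuous lborel \<nu>"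
    and \<rho>: "\<rho> \<in> prob_unit_ball" and "0 < e"
  shows "\<exists>f\<in>convex_lip1. integral\<^sup>L \<nu> f - integral\<^sup>L \<mu> f \<le> corr_cost \<nu> \<rho> - corr_cost \<mu> \<rho> + e"
proof -
  define E where "E = integral\<^sup>L \<mu> norm + integral\<^sup>L \<nu> norm"
  define \<delta> where "\<delta> = e / (1 + E)"
  have "0 \<le> E" by (simp add: E_def)
  then have "0 < \<delta>" using \<open>0 < e\<close> by (simp add: \<delta>_def)
  have "\<delta> * E \<le> \<delta> * (1 + E)" using \<open>0 < \<delta>\<close> by simp
  also have "\<dots> = e" using \<open>0 \<le> E\<close> by (simp add: \<delta>_def)
  finally have \<delta>_le: "\<delta> * E \<le> e" .
  obtain T :: "'a \<Rightarrow> 'a" where T: "T \<in> borel_measurable borel" "finite (range T)"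
    "\<And>y. norm (T y) \<le> 1" "\<And>y. norm y \<le> 1 \<Longrightarrow> norm (T y - y) < \<delta>"
    using finite_quantizer[OF \<open>0 < \<delta>\<close>] by blast
  have close: "norm (T y - y) \<le> \<delta>" if "norm y \<le> 1" for y using T(4)[OF that] by simp
  have \<rho>': "\<rho> \<in> borel_prob" by (rule prob_unit_ball_borel_prob[OF \<rho>])
  obtain Z A v where Z: "finite Z" "Z \<noteq> {}" "Z \<subseteq> range T" "AE y in \<rho>. T y \<in> Z"
    and A: "A \<in> borel_measurable borel" "\<And>x. A x \<in> Z" "\<And>x. inner x (A x) - v (A x) = max_affine Z id v x"
    and masses: "\<And>z. z \<in> Z \<Longrightarrow> measure \<nu> (A -` {z}) = measure \<rho> (T -` {z})"
      "\<And>z. z \<in> Z \<Longrightarrow> 0 < measure \<rho> (T -` {z})"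
    by (rule semidiscrete_transport_to_quantized[OF \<nu> moment(2) ac \<rho>' T(1,2)]) (rule that; assumption)
  let ?f = "max_affine Z id v"
  let ?\<Sigma> = "\<Sum>z\<in>Z. v z * measure \<rho> (T -` {z})"
  have f: "?f \<in> convex_lip1" using T(3) Z(3) by (intro max_affine_in_convex_lip1[OF Z(1,2)]) auto
  have "inner x z \<le> ?f x + v z" if "z \<in> Z" for x z
    using max_affine_ge[OF Z(1) that, of x id v] by simp
  from corr_cost_le_quantized[OF \<mu> \<rho> moment(1) T(1) Z(1,4) close integrable_convex_lip1[OF \<mu> moment(1) f]
      borel_measurable_convex_lip1[OF f] this]
  have "corr_cost \<mu> \<rho> \<le> integral\<^sup>L \<mu> ?f + \<delta> * integral\<^sup>L \<mu> norm + ?\<Sigma>" .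
  moreover have "integral\<^sup>L \<nu> ?f + ?\<Sigma> - \<delta> * integral\<^sup>L \<nu> norm \<le> corr_cost \<nu> \<rho>"
  proof -
    obtain \<pi> where \<pi>: "\<pi> \<in> couplings \<nu> \<rho>" "AE p in \<pi>. A (fst p) = T (snd p)"
      using coupling_matching_cells[OF \<nu> \<rho>' Z(1) A(1,2) T(1) Z(4) masses] by blast
    have "inner x (A x) = ?f x + (if A x \<in> Z then v (A x) else 0)" for x using A(2,3)[of x] by simp
    then have "(\<integral>x. inner x (A x) \<partial>\<nu>) = integral\<^sup>L \<nu> ?f + ?\<Sigma>"
      and "integrable \<nu> (\<lambda>x. inner x (A x))"
      using integrable_convex_lip1[OF \<nu> moment(2) f] integral_finite_valued_comp[OF \<nu> A(1) Z(1), of v]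
        masses(1) by simp_all
    with quantized_le_corr_cost[OF \<rho> moment(2) \<pi> A(1) _ close] show ?thesis by simp
  qed
  ultimately show ?thesis using \<delta>_le f unfolding E_def by (intro bexI[of _ ?f]) (auto simp: algebra_simps)
qed

lemma cINF_eq_if_mutually_approximating:
  fixes F :: "'a \<Rightarrow> real" and G :: "'b \<Rightarrow> real"
  assumes "A \<noteq> {}" and bdd: "bdd_below (F ` A)" "bdd_below (G ` B)"
    and G_le: "\<And>a e. a \<in> A \<Longrightarrow> 0 < e \<Longrightarrow> \<exists>b\<in>B. G b \<le> F a + e"
    and F_le: "\<And>b e. b \<in> B \<Longrightarrow> 0 < e \<Longrightarrow> \<exists>a\<in>A. F a \<le> G b + e"
  shows "(INF a\<in>A. F a) = (INF b\<in>B. G b)"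
proof (rule antisym)
  have "B \<noteq> {}" using G_le[of _ 1] \<open>A \<noteq> {}\<close> by fastforce
  show "(INF a\<in>A. F a) \<le> (INF b\<in>B. G b)"
  proof (rule cINF_greatest[OF \<open>B \<noteq> {}\<close> field_le_epsilon])
    fix b e assume "b \<in> B" "0 < (e::real)"
    then obtain a where "a \<in> A" "F a \<le> G b + e" using F_le by blast
    then show "(INF a\<in>A. F a) \<le> G b + e" using cINF_lower[OF bdd(1)] by (meson order_trans)
  qed
  show "(INF b\<in>B. G b) \<le> (INF a\<in>A. F a)"
  proof (rule cINF_greatest[OF \<open>A \<noteq> {}\<close> field_le_epsilon])
    fix a e assume "a \<in> A" "0 < (e::real)"
    then obtain b where "b \<in> B" "G b \<le> F a + e" using G_le by blast
    then show "(INF b\<in>B. G b) \<le> F a + e" using cINF_lower[OF bdd(2)] by (meson order_trans)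
  qed
qed

theorem proposition1:
  fixes \<mu> \<nu> :: "'a::euclidean_space measure"
  assumes "\<mu> \<in> borel_prob" and "\<nu> \<in> borel_prob"
    and "integrable \<mu> (\<lambda>x. norm x)" and "integrable \<nu> (\<lambda>x. norm x)"
    and "absolutely_continuous lborel \<mu>" and "absolutely_continuous \<mu> lborel"
    and "absolutely_continuous lborel \<nu>" and "absolutely_continuous \<nu> lborel"
  shows "(INF f\<in>convex_lip1. (\<integral>x. f x \<partial>\<nu>) - (\<integral>x. f x \<partial>\<mu>))
       = (INF \<rho>\<in>prob_unit_ball. corr_cost \<nu> \<rho> - corr_cost \<mu> \<rho>)"
proof (rule cINF_eq_if_mutually_approximating)
  \<comment> \<open>of the four absolute continuity hypotheses only \<open>absolutely_continuous lborel \<nu>\<close> is used\<close>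
  have moment: "integrable \<mu> norm" "integrable \<nu> norm" using assms(3,4) by simp_all
  let ?E = "integral\<^sup>L \<mu> norm + integral\<^sup>L \<nu> norm"
  show "convex_lip1 \<noteq> ({} :: ('a \<Rightarrow> real) set)"
    using max_affine_in_convex_lip1[of "{0}" id "\<lambda>_. 0"] by auto
  show "bdd_below ((\<lambda>f. (\<integral>x. f x \<partial>\<nu>) - (\<integral>x. f x \<partial>\<mu>)) ` convex_lip1)"
    using abs_integral_convex_lip1_le[OF assms(1) moment(1)]
      abs_integral_convex_lip1_le[OF assms(2) moment(2)]
    by (intro bdd_belowI2[of _ "- ?E"]) (smt (verit))
  show "bdd_below ((\<lambda>\<rho>. corr_cost \<nu> \<rho> - corr_cost \<mu> \<rho>) ` prob_unit_ball)"
    using corr_cost_le_norm_moment[OF assms(1) _ moment(1)]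
      neg_norm_moment_le_corr_cost[OF assms(2) _ moment(2)]
    by (intro bdd_belowI2[of _ "- ?E"]) (smt (verit))
  show "\<exists>\<rho>\<in>prob_unit_ball. corr_cost \<nu> \<rho> - corr_cost \<mu> \<rho> \<le> (\<integral>x. f x \<partial>\<nu>) - (\<integral>x. f x \<partial>\<mu>) + e"
    if "f \<in> convex_lip1" "0 < e" for f e
    using corr_cost_diff_le_convex_lip1[OF assms(1,2) moment that] by simp
  show "\<exists>f\<in>convex_lip1. (\<integral>x. f x \<partial>\<nu>) - (\<integral>x. f x \<partial>\<mu>) \<le> corr_cost \<nu> \<rho> - corr_cost \<mu> \<rho> + e"
    if "\<rho> \<in> prob_unit_ball" "0 < e" for \<rho> e
    using integral_diff_le_corr_cost_diff[OF assms(1,2) moment assms(7) that] by simp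
qed

end
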